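(* Let a lattice $\Lambda\subset\mathbb R^3$ have Voronoi type $V_2$, i.e. its Voronoi domain is a hexa-rhombic dodecahedron. (a) $\Lambda$ has an obtuse superbase $(v_0,v_1,v_2,v_3)$ with one pair of orthogonal vectors, say $v_2\cdot v_3=0$. Then any obtuse superbase of $\Lambda$ is isometric to one of the obtuse superbases $B_1=\{v_0,v_1,v_2,v_3\}$ and $B_2=\{v_0+v_3,\,v_1+v_3,\,v_2,\,-v_3\}$. (b) If an obtuse superbase $B_1=(v_0,v_1,v_2,v_3)$ with $v_2\cdot v_3=0$ has coform $\begin{pmatrix}0&p_{13}&p_{12}\\ p_{01}&p_{02}&p_{03}\end{pmatrix}$ (so $p_{23}=0$), then the obtuse superbase $B_2=(v_0+v_3,\,v_1+v_3,\,v_2,\,-v_3)$ has coform $\begin{pmatrix}0&p_{03}&p_{12}\\ p_{01}&p_{02}&p_{13}\end{pmatrix}$. (c) Every obtuse superbase $B$ of $\Lambda$ has exactly one zero conorm. Using the 24 index-permutations, its coform can be written as $\begin{pmatrix}0&p_{13}&p_{12}\\ p_{01}&p_{02}&p_{03}\end{pmatrix}$ with $p_{23}=0$, and these forms over all obtuse superbases of $\Lambda$ are related by the symmetry group $D_4$ of a square acting on the $2\times2$ submatrix $\begin{pmatrix}p_{13}&p_{12}\\ p_{02}&p_{03}\end{pmatrix}$, where the corners of the square in cyclic order are $p_{13},p_{12},p_{03},p_{02}$.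
   Context: A lattice $\Lambda\subset\mathbb R^3$ is the set of integer combinations of a basis. A superbase is $(v_0,v_1,v_2,v_3)$ with $v_1,v_2,v_3$ a basis of $\Lambda$ and $v_0=-v_1-v_2-v_3$; conorms $p_{ij}=-v_i\cdot v_j$ ($i\ne j$, $p_{ij}=p_{ji}$); obtuse if all $p_{ij}\ge0$. The coform is $\begin{pmatrix}p_{23}&p_{13}&p_{12}\\ p_{01}&p_{02}&p_{03}\end{pmatrix}$. An index-permutation $\sigma\in S_4$ maps $p_{ij}\mapsto p_{\sigma(i)\sigma(j)}$. Two superbases are isometric if an isometry of $\mathbb R^3$ fixing the origin maps one onto the other as sets of vectors. The Voronoi domain is $V(\Lambda)=\{p: |p|\le|p-v|\ \forall v\in\Lambda\}$. *)

theory Defs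
  imports "HOL-Analysis.Analysis" "HOL-Combinatorics.Permutations"
begin

type_synonym vec3 = "real^3"

definition lattice_gen :: "vec3 \<Rightarrow> vec3 \<Rightarrow> vec3 \<Rightarrow> vec3 set" where
  "lattice_gen b1 b2 b3 =
     {of_int i *\<^sub>R b1 + of_int j *\<^sub>R b2 + of_int k *\<^sub>R b3 | i j k :: int. True}"

definition is_lattice_basis :: "vec3 set \<Rightarrow> vec3 \<Rightarrow> vec3 \<Rightarrow> vec3 \<Rightarrow> bool" where
  "is_lattice_basis L b1 b2 b3 \<longleftrightarrow>
     b1 \<noteq> b2 \<and> b1 \<noteq> b3 \<and> b2 \<noteq> b3 \<and> independent {b1, b2, b3} \<and>
     L = lattice_gen b1 b2 b3"

definition is_lattice :: "vec3 set \<Rightarrow> bool" where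
  "is_lattice L \<longleftrightarrow> (\<exists>b1 b2 b3. is_lattice_basis L b1 b2 b3)"

text \<open>A superbase is indexed by 0,1,2,3 (values at other indices are irrelevant).\<close>
definition is_superbase :: "vec3 set \<Rightarrow> (nat \<Rightarrow> vec3) \<Rightarrow> bool" where
  "is_superbase L v \<longleftrightarrow> is_lattice_basis L (v 1) (v 2) (v 3) \<and> v 0 = - (v 1 + v 2 + v 3)"

definition conorm :: "(nat \<Rightarrow> vec3) \<Rightarrow> nat \<Rightarrow> nat \<Rightarrow> real" where
  "conorm v i j = - (v i \<bullet> v j)"

definition is_obtuse :: "(nat \<Rightarrow> vec3) \<Rightarrow> bool" where
  "is_obtuse v \<longleftrightarrow> (\<forall>i<4. \<forall>j<4. i \<noteq> j \<longrightarrow> conorm v i j \<ge> 0)"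

definition obtuse_superbase :: "vec3 set \<Rightarrow> (nat \<Rightarrow> vec3) \<Rightarrow> bool" where
  "obtuse_superbase L v \<longleftrightarrow> is_superbase L v \<and> is_obtuse v"

definition sb_set :: "(nat \<Rightarrow> vec3) \<Rightarrow> vec3 set" where
  "sb_set v = {v 0, v 1, v 2, v 3}"

text \<open>Two superbases are isometric: an isometry of R^3 fixing the origin
  (i.e. an orthogonal linear map) maps one onto the other as sets of vectors.\<close>
definition sb_isometric :: "(nat \<Rightarrow> vec3) \<Rightarrow> (nat \<Rightarrow> vec3) \<Rightarrow> bool" where
  "sb_isometric u v \<longleftrightarrow> (\<exists>f. orthogonal_transformation f \<and> f ` sb_set u = sb_set v)"

definition sbB2 :: "(nat \<Rightarrow> vec3) \<Rightarrow> (nat \<Rightarrow> vec3)" where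
  "sbB2 v = (\<lambda>i. if i = 0 then v 0 + v 3 else if i = 1 then v 1 + v 3
                 else if i = 2 then v 2 else - v 3)"

definition voronoi_domain :: "vec3 set \<Rightarrow> vec3 set" where
  "voronoi_domain L = {p. \<forall>v\<in>L. norm p \<le> norm (p - v)}"

definition comb_equiv :: "vec3 set \<Rightarrow> vec3 set \<Rightarrow> bool" where
  "comb_equiv P Q \<longleftrightarrow> (\<exists>\<phi>. bij_betw \<phi> {F. F face_of P} {G. G face_of Q} \<and>
      (\<forall>F1 F2. F1 face_of P \<longrightarrow> F2 face_of P \<longrightarrow> (F1 \<subseteq> F2 \<longleftrightarrow> \<phi> F1 \<subseteq> \<phi> F2)))"

text \<open>A reference hexa-rhombic (elongated) dodecahedron: 18 vertices, 4 hexagonal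
  faces (normals (+-1,+-1,0)) and 8 rhombic faces.\<close>
definition hexa_rhombic_dodecahedron :: "vec3 set" where
  "hexa_rhombic_dodecahedron = convex hull
     ({vector [a, b, c] | a b c :: real. a \<in> {-1,1} \<and> b \<in> {-1,1} \<and> c \<in> {-2,2}}
      \<union> {vector [0, 0, 3], vector [0, 0, -3]}
      \<union> {vector [a, 0, c] | a c :: real. a \<in> {-2,2} \<and> c \<in> {-1,1}}
      \<union> {vector [0, b, c] | b c :: real. b \<in> {-2,2} \<and> c \<in> {-1,1}})"

definition voronoi_type_V2 :: "vec3 set \<Rightarrow> bool" where
  "voronoi_type_V2 L \<longleftrightarrow> comb_equiv (voronoi_domain L) hexa_rhombic_dodecahedron"

text \<open>Corners of the square in cyclic order: p13, p12, p03, p02.\<close>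
definition sq_corner :: "(nat \<Rightarrow> vec3) \<Rightarrow> nat \<Rightarrow> real" where
  "sq_corner v k = (let ij = [(1::nat,3::nat), (1,2), (0,3), (0,2)] ! k in conorm v (fst ij) (snd ij))"

definition D4 :: "(nat \<Rightarrow> nat) set" where
  "D4 = {(\<lambda>k. (r + k) mod 4) | r. r < 4} \<union> {(\<lambda>k. (r + 4 - k) mod 4) | r. r < 4}"

end

theory Submission
  imports Defs
begin

text \<open>
  For an obtuse superbase, Selling's formula
  norm (Sum n k v k)^2 = 1/2 Sum p_ij (n i - n j)^2 identifies the Voronoi domain with the
  polytope cut out by the inequalities x \<bullet> v_S \<le> norm v_S ^ 2 / 2 for the partial sums
  v_S, S \<subseteq> {0..3}.  A vertex of this polytope maximizes some functional Sum n k (x \<bullet> v k) and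
  is then fixed by the signs of n i - n j on the pairs ij with p_ij \<noteq> 0, so there are at
  most 2^e vertices when e conorms are nonzero; if all six are positive, the 24 orderings
  of {0..3} give 24 distinct vertices.  A combinatorial equivalence preserves the number of
  vertices, and the hexa-rhombic dodecahedron has 18 of them, so 16 < 18 < 24 leaves
  exactly one zero conorm.

  For the classification, let v have p_23 = 0 and the other conorms positive.  For any
  obtuse superbase u the seven nonzero partial sums of u 1, u 2, u 3 are shortest in their
  classes modulo 2L (Selling's formula again); in the coordinates of v this allows only
  sixteen coordinate triples, and a finite enumeration shows that (u 1, u 2, u 3) is, up to
  sign, a reordering of B1 or B2.  Reading off the conorms of these superbases gives part (b)
  and the D4 action of part (c).
\<close>

section \<open>Selling's formula and a Lovasz-type bound\<close>

lemma sum_atLeast0_atMost_3: "(\<Sum>k\<in>{0..3::nat}. f k) = f 0 + f 1 + f 2 + f 3"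
  by (simp add: eval_nat_numeral atLeast0_atMost_Suc add_ac)

lemma sum_permutes_0_3:
  assumes "\<sigma> permutes {0..3::nat}"
  shows "(\<Sum>k\<in>{0..3}. f k) = f (\<sigma> 0) + f (\<sigma> 1) + f (\<sigma> 2) + f (\<sigma> 3)"
  using sum.permute[OF assms, of f] by (simp add: sum_atLeast0_atMost_3)

lemma conorm_commute: "conorm v i j = conorm v j i"
  by (simp add: conorm_def inner_commute)

definition cut_value :: "(nat \<Rightarrow> nat \<Rightarrow> real) \<Rightarrow> nat set \<Rightarrow> real" where
  "cut_value p S = (\<Sum>i\<in>{0..3}. \<Sum>j\<in>{0..3}. p i j * (of_bool (i \<in> S) - of_bool (j \<in> S))\<^sup>2) / 2"

lemma selling_formula:
  assumes v0: "v 0 = - (v 1 + v 2 + v 3)"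
  shows "(norm (\<Sum>k\<in>{0..3::nat}. n k *\<^sub>R v k))\<^sup>2 =
     (\<Sum>i\<in>{0..3}. \<Sum>j\<in>{0..3}. conorm v i j * (n i - n j)\<^sup>2) / 2"
proof -
  have "(norm (\<Sum>k\<in>{0..3::nat}. n k *\<^sub>R v k))\<^sup>2 =
    (norm (n 0 *\<^sub>R (-(v 1 + v 2 + v 3)) + n 1 *\<^sub>R v 1 + n 2 *\<^sub>R v 2 + n 3 *\<^sub>R v 3))\<^sup>2"
    by (simp add: sum_atLeast0_atMost_3 v0)
  also have "\<dots> = (\<Sum>i\<in>{0..3}. \<Sum>j\<in>{0..3}. conorm v i j * (n i - n j)\<^sup>2) / 2"
    unfolding power2_norm_eq_inner
    by (simp add: sum_atLeast0_atMost_3 conorm_def v0 inner_add_left inner_add_right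
        inner_diff_left inner_diff_right inner_commute power2_eq_square algebra_simps)
  finally show ?thesis .
qed

lemma norm_partial_sum_eq_cut_value:
  assumes "v 0 = - (v 1 + v 2 + v 3)"
  shows "(norm (\<Sum>k\<in>{0..3::nat}. of_bool (k \<in> S) *\<^sub>R v k))\<^sup>2 = cut_value (conorm v) S"
  using selling_formula[OF assms] by (simp add: cut_value_def)

lemma sum_eq_telescoping:
  fixes n t :: "nat \<Rightarrow> real"
  assumes \<sigma>: "\<sigma> permutes {0..3::nat}" and zero: "(\<Sum>k\<in>{0..3}. t k) = 0"
  shows "(\<Sum>k\<in>{0..3}. n k * t k) = (n (\<sigma> 0) - n (\<sigma> 1)) * t (\<sigma> 0)
     + (n (\<sigma> 1) - n (\<sigma> 2)) * (t (\<sigma> 0) + t (\<sigma> 1))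
     + (n (\<sigma> 2) - n (\<sigma> 3)) * (t (\<sigma> 0) + t (\<sigma> 1) + t (\<sigma> 2))"
proof -
  have "(\<Sum>k\<in>{0..3}. n k * t k) = (n (\<sigma> 0) - n (\<sigma> 1)) * t (\<sigma> 0)
     + (n (\<sigma> 1) - n (\<sigma> 2)) * (t (\<sigma> 0) + t (\<sigma> 1))
     + (n (\<sigma> 2) - n (\<sigma> 3)) * (t (\<sigma> 0) + t (\<sigma> 1) + t (\<sigma> 2))
     + n (\<sigma> 3) * (t (\<sigma> 0) + t (\<sigma> 1) + t (\<sigma> 2) + t (\<sigma> 3))"
    unfolding sum_permutes_0_3[OF \<sigma>] by (simp add: algebra_simps)
  then show ?thesis
    using zero unfolding sum_permutes_0_3[OF \<sigma>] by simp
qed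

lemma sum_abs_diff_eq_cut_values:
  assumes sym: "\<And>i j. p i j = p j i" and \<sigma>: "\<sigma> permutes {0..3::nat}"
    and mono: "n (\<sigma> 0) \<ge> n (\<sigma> 1)" "n (\<sigma> 1) \<ge> n (\<sigma> 2)" "n (\<sigma> 2) \<ge> n (\<sigma> 3)"
  shows "(\<Sum>i\<in>{0..3}. \<Sum>j\<in>{0..3}. p i j * \<bar>n i - n j\<bar>) / 4 =
     (n (\<sigma> 0) - n (\<sigma> 1)) * (cut_value p (\<sigma> ` {0}) / 2)
     + (n (\<sigma> 1) - n (\<sigma> 2)) * (cut_value p (\<sigma> ` {0, 1}) / 2)
     + (n (\<sigma> 2) - n (\<sigma> 3)) * (cut_value p (\<sigma> ` {0, 1, 2}) / 2)"
proof -
  have inj: "\<sigma> i = \<sigma> j \<longleftrightarrow> i = j" for i j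
    using permutes_inj[OF \<sigma>] by (simp add: inj_eq)
  have "(\<Sum>i\<in>{0..3}. \<Sum>j\<in>{0..3}. p i j * \<bar>n i - n j\<bar>) = 2 *
     (p (\<sigma> 0) (\<sigma> 1) * \<bar>n (\<sigma> 0) - n (\<sigma> 1)\<bar> + p (\<sigma> 0) (\<sigma> 2) * \<bar>n (\<sigma> 0) - n (\<sigma> 2)\<bar>
      + p (\<sigma> 0) (\<sigma> 3) * \<bar>n (\<sigma> 0) - n (\<sigma> 3)\<bar> + p (\<sigma> 1) (\<sigma> 2) * \<bar>n (\<sigma> 1) - n (\<sigma> 2)\<bar>
      + p (\<sigma> 1) (\<sigma> 3) * \<bar>n (\<sigma> 1) - n (\<sigma> 3)\<bar> + p (\<sigma> 2) (\<sigma> 3) * \<bar>n (\<sigma> 2) - n (\<sigma> 3)\<bar>)"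
    unfolding sum_permutes_0_3[OF \<sigma>] by (simp add: sym abs_minus_commute)
  moreover have "cut_value p (\<sigma> ` {0}) = p (\<sigma> 0) (\<sigma> 1) + p (\<sigma> 0) (\<sigma> 2) + p (\<sigma> 0) (\<sigma> 3)"
    "cut_value p (\<sigma> ` {0, 1}) = p (\<sigma> 0) (\<sigma> 2) + p (\<sigma> 0) (\<sigma> 3) + p (\<sigma> 1) (\<sigma> 2) + p (\<sigma> 1) (\<sigma> 3)"
    "cut_value p (\<sigma> ` {0, 1, 2}) = p (\<sigma> 0) (\<sigma> 3) + p (\<sigma> 1) (\<sigma> 3) + p (\<sigma> 2) (\<sigma> 3)"
    unfolding cut_value_def sum_permutes_0_3[OF \<sigma>] by (simp_all add: inj sym)
  moreover have "\<bar>n (\<sigma> 0) - n (\<sigma> 1)\<bar> = n (\<sigma> 0) - n (\<sigma> 1)" "\<bar>n (\<sigma> 0) - n (\<sigma> 2)\<bar> = n (\<sigma> 0) - n (\<sigma> 2)"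
    "\<bar>n (\<sigma> 0) - n (\<sigma> 3)\<bar> = n (\<sigma> 0) - n (\<sigma> 3)" "\<bar>n (\<sigma> 1) - n (\<sigma> 2)\<bar> = n (\<sigma> 1) - n (\<sigma> 2)"
    "\<bar>n (\<sigma> 1) - n (\<sigma> 3)\<bar> = n (\<sigma> 1) - n (\<sigma> 3)" "\<bar>n (\<sigma> 2) - n (\<sigma> 3)\<bar> = n (\<sigma> 2) - n (\<sigma> 3)"
    using mono by auto
  ultimately show ?thesis
    by (simp only:) (simp add: field_simps)
qed

lemma obtain_sorting_permutation:
  fixes n :: "nat \<Rightarrow> real"
  obtains \<sigma> where "\<sigma> permutes {0..3}" "n (\<sigma> 0) \<ge> n (\<sigma> 1)" "n (\<sigma> 1) \<ge> n (\<sigma> 2)" "n (\<sigma> 2) \<ge> n (\<sigma> 3)"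
proof -
  define xs where "xs = sort_key (\<lambda>k. - n k) [0,1,2,3::nat]"
  have len: "length xs = 4" by (simp add: xs_def)
  have dist: "distinct xs" by (simp add: xs_def)
  have set: "set xs = {0..3}" by (auto simp: xs_def)
  have sorted: "sorted (map (\<lambda>k. - n k) xs)" by (simp add: xs_def del: sort_key_simps)
  define \<sigma> where "\<sigma> k = (if k < 4 then xs ! k else k)" for k
  have "bij_betw ((!) xs) {..<length xs} (set xs)" using dist by (rule bij_betw_nth) auto
  then have b: "bij_betw ((!) xs) {0..3} {0..3}" using len set
    by (simp add: atLeast0AtMost lessThan_Suc_atMost eval_nat_numeral)
  have "bij_betw \<sigma> {0..3} {0..3}"
    using b by (rule bij_betw_cong[THEN iffD1, rotated]) (auto simp: \<sigma>_def)
  then have perm: "\<sigma> permutes {0..3}" by (rule bij_imp_permutes) (auto simp: \<sigma>_def)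
  have mono: "- n (xs ! i) \<le> - n (xs ! j)" if "i \<le> j" "j < 4" for i j
    using sorted that len by (auto simp: sorted_iff_nth_mono)
  show ?thesis using that perm mono[of 0 1] mono[of 1 2] mono[of 2 3] by (auto simp: \<sigma>_def)
qed

locale cut_bounded =
  fixes p :: "nat \<Rightarrow> nat \<Rightarrow> real" and t :: "nat \<Rightarrow> real"
  assumes sym: "\<And>i j. p i j = p j i"
    and sum_zero: "(\<Sum>k\<in>{0..3}. t k) = 0"
    and cut_le: "\<And>S. S \<subseteq> {0..3} \<Longrightarrow> (\<Sum>k\<in>S. t k) \<le> cut_value p S / 2"
begin

lemma partial_sums_le:
  assumes \<sigma>: "\<sigma> permutes {0..3}"
  shows "t (\<sigma> 0) \<le> cut_value p (\<sigma> ` {0}) / 2"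
    "t (\<sigma> 0) + t (\<sigma> 1) \<le> cut_value p (\<sigma> ` {0, 1}) / 2"
    "t (\<sigma> 0) + t (\<sigma> 1) + t (\<sigma> 2) \<le> cut_value p (\<sigma> ` {0, 1, 2}) / 2"
proof -
  have cut: "(\<Sum>k\<in>A. t (\<sigma> k)) \<le> cut_value p (\<sigma> ` A) / 2" if "A \<subseteq> {0..3}" for A
  proof -
    have "\<sigma> ` A \<subseteq> {0..3}" using that permutes_image[OF \<sigma>] by blast
    moreover have "(\<Sum>k\<in>\<sigma> ` A. t k) = (\<Sum>k\<in>A. t (\<sigma> k))"
      using permutes_inj[OF \<sigma>] by (simp add: sum.reindex inj_on_subset)
    ultimately show ?thesis using cut_le by metis
  qed
  show "t (\<sigma> 0) \<le> cut_value p (\<sigma> ` {0}) / 2"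
    "t (\<sigma> 0) + t (\<sigma> 1) \<le> cut_value p (\<sigma> ` {0, 1}) / 2"
    "t (\<sigma> 0) + t (\<sigma> 1) + t (\<sigma> 2) \<le> cut_value p (\<sigma> ` {0, 1, 2}) / 2"
    using cut[of "{0}"] cut[of "{0, 1}"] cut[of "{0, 1, 2}"] by (simp_all add: add.assoc)
qed

text \<open>The right-hand side is the Lovasz extension of the cut function at n.\<close>
lemma lovasz_bound:
  "(\<Sum>k\<in>{0..3}. n k * t k) \<le> (\<Sum>i\<in>{0..3}. \<Sum>j\<in>{0..3}. p i j * \<bar>n i - n j\<bar>) / 4"
proof -
  obtain \<sigma> where \<sigma>: "\<sigma> permutes {0..3}"
    and mono: "n (\<sigma> 0) \<ge> n (\<sigma> 1)" "n (\<sigma> 1) \<ge> n (\<sigma> 2)" "n (\<sigma> 2) \<ge> n (\<sigma> 3)"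
    using obtain_sorting_permutation by blast
  note le = partial_sums_le[OF \<sigma>]
  show ?thesis
    unfolding sum_eq_telescoping[OF \<sigma> sum_zero] sum_abs_diff_eq_cut_values[OF sym \<sigma> mono]
    using mult_left_mono[OF le(1), of "n (\<sigma> 0) - n (\<sigma> 1)"] mult_left_mono[OF le(2), of "n (\<sigma> 1) - n (\<sigma> 2)"]
      mult_left_mono[OF le(3), of "n (\<sigma> 2) - n (\<sigma> 3)"] mono
    by simp
qed

lemma lovasz_bound_tight:
  assumes \<sigma>: "\<sigma> permutes {0..3}"
    and mono: "n (\<sigma> 0) > n (\<sigma> 1)" "n (\<sigma> 1) > n (\<sigma> 2)" "n (\<sigma> 2) > n (\<sigma> 3)"
    and ge: "(\<Sum>k\<in>{0..3}. n k * t k) \<ge> (\<Sum>i\<in>{0..3}. \<Sum>j\<in>{0..3}. p i j * \<bar>n i - n j\<bar>) / 4"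
  shows "t (\<sigma> 0) = cut_value p (\<sigma> ` {0}) / 2"
    "t (\<sigma> 0) + t (\<sigma> 1) = cut_value p (\<sigma> ` {0, 1}) / 2"
    "t (\<sigma> 0) + t (\<sigma> 1) + t (\<sigma> 2) = cut_value p (\<sigma> ` {0, 1, 2}) / 2"
proof -
  note le = partial_sums_le[OF \<sigma>]
  have l1: "(n (\<sigma> 0) - n (\<sigma> 1)) * t (\<sigma> 0) \<le> (n (\<sigma> 0) - n (\<sigma> 1)) * (cut_value p (\<sigma> ` {0}) / 2)"
    using mult_left_mono[OF le(1)] mono by simp
  have l2: "(n (\<sigma> 1) - n (\<sigma> 2)) * (t (\<sigma> 0) + t (\<sigma> 1)) \<le> (n (\<sigma> 1) - n (\<sigma> 2)) * (cut_value p (\<sigma> ` {0, 1}) / 2)"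
    using mult_left_mono[OF le(2)] mono by simp
  have l3: "(n (\<sigma> 2) - n (\<sigma> 3)) * (t (\<sigma> 0) + t (\<sigma> 1) + t (\<sigma> 2)) \<le> (n (\<sigma> 2) - n (\<sigma> 3)) * (cut_value p (\<sigma> ` {0, 1, 2}) / 2)"
    using mult_left_mono[OF le(3)] mono by simp
  have "(n (\<sigma> 0) - n (\<sigma> 1)) * t (\<sigma> 0) = (n (\<sigma> 0) - n (\<sigma> 1)) * (cut_value p (\<sigma> ` {0}) / 2)"
    "(n (\<sigma> 1) - n (\<sigma> 2)) * (t (\<sigma> 0) + t (\<sigma> 1)) = (n (\<sigma> 1) - n (\<sigma> 2)) * (cut_value p (\<sigma> ` {0, 1}) / 2)"
    "(n (\<sigma> 2) - n (\<sigma> 3)) * (t (\<sigma> 0) + t (\<sigma> 1) + t (\<sigma> 2)) = (n (\<sigma> 2) - n (\<sigma> 3)) * (cut_value p (\<sigma> ` {0, 1, 2}) / 2)"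
    using ge l1 l2 l3 mono
    unfolding sum_eq_telescoping[OF \<sigma> sum_zero] sum_abs_diff_eq_cut_values[OF sym \<sigma> less_imp_le[OF mono(1)] less_imp_le[OF mono(2)] less_imp_le[OF mono(3)]]
    by linarith+
  then show "t (\<sigma> 0) = cut_value p (\<sigma> ` {0}) / 2"
    "t (\<sigma> 0) + t (\<sigma> 1) = cut_value p (\<sigma> ` {0, 1}) / 2"
    "t (\<sigma> 0) + t (\<sigma> 1) + t (\<sigma> 2) = cut_value p (\<sigma> ` {0, 1, 2}) / 2"
    using mono by simp_all
qed

end

section \<open>The Voronoi domain of an obtuse superbase\<close>

definition skew :: "(nat \<Rightarrow> nat \<Rightarrow> real) \<Rightarrow> bool" where
  "skew s \<longleftrightarrow> (\<forall>i j. s i j = - s j i)"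

definition unit_bounded :: "(nat \<Rightarrow> nat \<Rightarrow> real) \<Rightarrow> bool" where
  "unit_bounded s \<longleftrightarrow> (\<forall>i j. \<bar>s i j\<bar> \<le> 1)"

lemma skewD: "skew s \<Longrightarrow> s i j = - s j i"
  unfolding skew_def by blast

lemma double_sum_skew_eq_0:
  fixes f :: "nat \<Rightarrow> nat \<Rightarrow> real"
  assumes "\<And>i j. f i j = - f j i"
  shows "(\<Sum>i\<in>A. \<Sum>j\<in>A. f i j) = 0"
proof -
  have "(\<Sum>i\<in>A. \<Sum>j\<in>A. f i j) = (\<Sum>j\<in>A. \<Sum>i\<in>A. f i j)" by (rule sum.swap)
  also have "\<dots> = (\<Sum>j\<in>A. \<Sum>i\<in>A. - f j i)"
    by (intro sum.cong refl assms)
  also have "\<dots> = - (\<Sum>j\<in>A. \<Sum>i\<in>A. f j i)"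
    by (simp add: sum_negf)
  finally show ?thesis by simp
qed

lemma double_sum_skew_mult:
  fixes p s :: "nat \<Rightarrow> nat \<Rightarrow> real"
  assumes sym: "\<And>i j. p i j = p j i" and skew: "skew s"
  shows "(\<Sum>k\<in>A. n k * (\<Sum>j\<in>A. p k j * s k j)) = (\<Sum>k\<in>A. \<Sum>j\<in>A. p k j * s k j * (n k - n j)) / 2"
proof -
  have "(\<Sum>k\<in>A. \<Sum>j\<in>A. p k j * s k j * n j) = - (\<Sum>k\<in>A. \<Sum>j\<in>A. p k j * s k j * n k)"
  proof -
    have "(\<Sum>k\<in>A. \<Sum>j\<in>A. p k j * s k j * n j) = (\<Sum>j\<in>A. \<Sum>k\<in>A. p k j * s k j * n j)" by (rule sum.swap)
    also have "\<dots> = (\<Sum>j\<in>A. \<Sum>k\<in>A. - (p j k * s j k * n j))"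
    proof (intro sum.cong refl)
      fix j k
      show "p k j * s k j * n j = - (p j k * s j k * n j)"
        using sym[of k j] skewD[OF skew, of k j] by simp
    qed
    also have "\<dots> = - (\<Sum>j\<in>A. \<Sum>k\<in>A. p j k * s j k * n j)"
      by (simp add: sum_negf)
    finally show ?thesis .
  qed
  moreover have "(\<Sum>k\<in>A. \<Sum>j\<in>A. p k j * s k j * n k) = (\<Sum>k\<in>A. n k * (\<Sum>j\<in>A. p k j * s k j))"
    by (simp add: sum_distrib_left mult.commute mult.left_commute)
  ultimately show ?thesis
    by (simp add: algebra_simps sum_subtractf)
qed

lemma abs_le_square_of_int: "\<bar>real_of_int m\<bar> \<le> (real_of_int m)\<^sup>2"
proof (cases "m = 0")
  case False
  then have "1 \<le> \<bar>real_of_int m\<bar>" by linarith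
  then have "\<bar>real_of_int m\<bar> * 1 \<le> \<bar>real_of_int m\<bar> * \<bar>real_of_int m\<bar>" by (intro mult_left_mono) auto
  then show ?thesis by (simp add: power2_eq_square)
qed simp

lemma voronoi_domain_iff_inner: "x \<in> voronoi_domain L \<longleftrightarrow> (\<forall>y\<in>L. 2 * (x \<bullet> y) \<le> y \<bullet> y)"
proof -
  have "norm x \<le> norm (x - y) \<longleftrightarrow> 2 * (x \<bullet> y) \<le> y \<bullet> y" for y
  proof -
    have "norm x \<le> norm (x - y) \<longleftrightarrow> x \<bullet> x \<le> (x - y) \<bullet> (x - y)" by (rule norm_le)
    also have "\<dots> \<longleftrightarrow> 2 * (x \<bullet> y) \<le> y \<bullet> y"
      by (simp add: inner_diff_left inner_diff_right inner_commute)
    finally show ?thesis .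
  qed
  then show ?thesis by (simp add: voronoi_domain_def)
qed

locale superbase =
  fixes L :: "vec3 set" and v :: "nat \<Rightarrow> vec3"
  assumes superbase: "is_superbase L v"
begin

lemma v0_eq: "v 0 = - (v 1 + v 2 + v 3)"
  using superbase by (simp add: is_superbase_def)

lemma L_eq: "L = lattice_gen (v 1) (v 2) (v 3)"
  using superbase by (simp add: is_superbase_def is_lattice_basis_def)

lemma independent_basis: "independent {v 1, v 2, v 3}"
  using superbase by (simp add: is_superbase_def is_lattice_basis_def)

lemma basis_distinct: "v 1 \<noteq> v 2" "v 1 \<noteq> v 3" "v 2 \<noteq> v 3"
  using superbase by (auto simp add: is_superbase_def is_lattice_basis_def)

lemma sum_v_eq_0: "(\<Sum>k\<in>{0..3}. v k) = 0"
  by (simp add: sum_atLeast0_atMost_3 v0_eq)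

lemma sum_inner_v_eq_0: "(\<Sum>k\<in>{0..3}. x \<bullet> v k) = 0"
  using sum_v_eq_0 by (simp add: inner_sum_right[symmetric])

lemma inner_sum_v: "x \<bullet> (\<Sum>k\<in>{0..3}. n k *\<^sub>R v k) = (\<Sum>k\<in>{0..3}. n k * (x \<bullet> v k))"
  by (simp add: inner_sum_right)

lemma sum_v_inner: "(\<Sum>k\<in>{0..3}. n k *\<^sub>R v k) \<bullet> x = (\<Sum>k\<in>{0..3}. n k * (x \<bullet> v k))"
  by (subst inner_commute) (rule inner_sum_v)

lemma span_basis: "span {v 1, v 2, v 3} = UNIV"
proof -
  have "card {v 1, v 2, v 3} = 3" using basis_distinct by simp
  then have "dim (UNIV::vec3 set) \<le> card {v 1, v 2, v 3}" by simp
  from card_ge_dim_independent[OF _ independent_basis this] show ?thesis by auto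
qed

lemma eq_if_inner_basis_eq:
  assumes "x \<bullet> v 1 = y \<bullet> v 1" "x \<bullet> v 2 = y \<bullet> v 2" "x \<bullet> v 3 = y \<bullet> v 3"
  shows "x = y"
proof -
  have "orthogonal (x - y) z" if "z \<in> span {v 1, v 2, v 3}" for z
    by (rule orthogonal_to_span[OF that]) (use assms in \<open>auto simp: orthogonal_def inner_diff_left\<close>)
  then have "orthogonal (x - y) (x - y)" using span_basis by auto
  then show ?thesis by (simp add: orthogonal_def)
qed

definition basis_rows :: "real^3^3" where "basis_rows = vector [v 1, v 2, v 3]"

lemma basis_rows_mult: "basis_rows *v x = vector [v 1 \<bullet> x, v 2 \<bullet> x, v 3 \<bullet> x]"
  by (simp add: vec_eq_iff basis_rows_def matrix_vector_mult_def inner_vec_def forall_3 vector_3)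

lemma inj_basis_rows: "inj ((*v) basis_rows)"
proof (rule injI)
  fix x y assume "basis_rows *v x = basis_rows *v y"
  then have "x \<bullet> v 1 = y \<bullet> v 1" "x \<bullet> v 2 = y \<bullet> v 2" "x \<bullet> v 3 = y \<bullet> v 3"
    by (simp_all add: basis_rows_mult vec_eq_iff forall_3 vector_3 inner_commute)
  then show "x = y" by (rule eq_if_inner_basis_eq)
qed

lemma exists_inner_basis_eq: "\<exists>x. x \<bullet> v 1 = T1 \<and> x \<bullet> v 2 = T2 \<and> x \<bullet> v 3 = T3"
proof -
  have "surj ((*v) basis_rows)"
    using inj_basis_rows matrix_vector_mul_linear by (rule eucl.linear_inj_imp_surj[rotated])
  then obtain x where "basis_rows *v x = vector [T1, T2, T3]" by (metis surjD)
  then have "x \<bullet> v 1 = T1 \<and> x \<bullet> v 2 = T2 \<and> x \<bullet> v 3 = T3"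
    by (simp add: basis_rows_mult vec_eq_iff forall_3 vector_3 inner_commute)
  then show ?thesis by blast
qed

lemma exists_coeffs: "\<exists>n. a = (\<Sum>k\<in>{0..3}. n k *\<^sub>R v k)"
proof -
  have "a \<in> span {v 1, v 2, v 3}" using span_basis by simp
  then obtain c1 where "a - c1 *\<^sub>R v 1 \<in> span {v 2, v 3}" by (auto simp: span_insert)
  then obtain c2 where "a - c1 *\<^sub>R v 1 - c2 *\<^sub>R v 2 \<in> span {v 3}" by (auto simp: span_insert)
  then obtain c3 where c3: "a - c1 *\<^sub>R v 1 - c2 *\<^sub>R v 2 = c3 *\<^sub>R v 3" by (auto simp: span_singleton)
  define n :: "nat \<Rightarrow> real" where "n k = (if k = 1 then c1 else if k = 2 then c2 else if k = 3 then c3 else 0)" for k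
  have "a = (\<Sum>k\<in>{0..3}. n k *\<^sub>R v k)" using c3 by (simp add: sum_atLeast0_atMost_3 n_def algebra_simps)
  then show ?thesis by blast
qed

lemma int_combination_in_L: "(\<Sum>k\<in>{0..3}. real_of_int (m k) *\<^sub>R v k) \<in> L"
proof -
  have "(\<Sum>k\<in>{0..3}. real_of_int (m k) *\<^sub>R v k) =
      of_int (m 1 - m 0) *\<^sub>R v 1 + of_int (m 2 - m 0) *\<^sub>R v 2 + of_int (m 3 - m 0) *\<^sub>R v 3"
    by (simp add: sum_atLeast0_atMost_3 v0_eq algebra_simps)
  then show ?thesis unfolding L_eq lattice_gen_def by blast
qed

lemma obtain_int_coeffs:
  assumes "y \<in> L"
  obtains m :: "nat \<Rightarrow> int" where "y = (\<Sum>k\<in>{0..3}. real_of_int (m k) *\<^sub>R v k)"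
proof -
  from assms obtain i j k :: int where y: "y = of_int i *\<^sub>R v 1 + of_int j *\<^sub>R v 2 + of_int k *\<^sub>R v 3"
    unfolding L_eq lattice_gen_def by blast
  define m :: "nat \<Rightarrow> int" where "m x = (if x = 1 then i else if x = 2 then j else if x = 3 then k else 0)" for x
  have "y = (\<Sum>l\<in>{0..3}. real_of_int (m l) *\<^sub>R v l)" by (simp add: sum_atLeast0_atMost_3 m_def y)
  then show ?thesis by (rule that)
qed

definition cut_polytope :: "vec3 set" where
  "cut_polytope = {x. \<forall>S\<subseteq>{0..3::nat}. (\<Sum>k\<in>S. x \<bullet> v k) \<le> cut_value (conorm v) S / 2}"

lemma voronoi_domain_subset_cut_polytope: "voronoi_domain L \<subseteq> cut_polytope"
proof (unfold cut_polytope_def, intro subsetI CollectI allI impI)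
  fix x and S :: "nat set" assume x: "x \<in> voronoi_domain L" and S: "S \<subseteq> {0..3}"
  define y where "y = (\<Sum>k\<in>{0..3}. of_bool (k \<in> S) *\<^sub>R v k)"
  have "y \<in> L"
    using int_combination_in_L[of "\<lambda>k. of_bool (k \<in> S)"] by (simp add: y_def)
  then have "2 * (x \<bullet> y) \<le> y \<bullet> y" using x voronoi_domain_iff_inner by blast
  moreover have "y \<bullet> y = cut_value (conorm v) S"
    using norm_partial_sum_eq_cut_value[OF v0_eq, of S] by (simp add: y_def power2_norm_eq_inner)
  moreover have "x \<bullet> y = (\<Sum>k\<in>S. x \<bullet> v k)"
    using S by (simp add: y_def inner_sum_v Int_absorb1)
  ultimately show "(\<Sum>k\<in>S. x \<bullet> v k) \<le> cut_value (conorm v) S / 2" by simp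
qed

definition net_flow :: "(nat \<Rightarrow> nat \<Rightarrow> real) \<Rightarrow> nat \<Rightarrow> real" where
  "net_flow s k = (\<Sum>j\<in>{0..3}. conorm v k j * s k j) / 2"

text \<open>For sign patterns s these points are the vertices of the Voronoi domain.\<close>
definition flow_point :: "(nat \<Rightarrow> nat \<Rightarrow> real) \<Rightarrow> vec3" where
  "flow_point s = (SOME x. x \<bullet> v 1 = net_flow s 1 \<and> x \<bullet> v 2 = net_flow s 2 \<and> x \<bullet> v 3 = net_flow s 3)"

lemma sum_net_flow_eq_0:
  assumes "skew s"
  shows "(\<Sum>k\<in>{0..3}. net_flow s k) = 0"
proof -
  have "(\<Sum>k\<in>{0..3}. \<Sum>j\<in>{0..3}. conorm v k j * s k j) = 0"
  proof (rule double_sum_skew_eq_0)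
    fix i j
    show "conorm v i j * s i j = - (conorm v j i * s j i)"
      using skewD[OF assms, of i j] conorm_commute[of v i j] by simp
  qed
  then show ?thesis by (simp add: net_flow_def sum_divide_distrib[symmetric])
qed

lemma flow_point_inner:
  assumes "skew s" "k \<in> {0..3}"
  shows "flow_point s \<bullet> v k = net_flow s k"
proof -
  have *: "flow_point s \<bullet> v 1 = net_flow s 1 \<and> flow_point s \<bullet> v 2 = net_flow s 2 \<and> flow_point s \<bullet> v 3 = net_flow s 3"
    unfolding flow_point_def by (rule someI_ex, rule exists_inner_basis_eq)
  have "flow_point s \<bullet> v 0 = net_flow s 0"
    using * sum_net_flow_eq_0[OF assms(1)] by (simp add: v0_eq sum_atLeast0_atMost_3 inner_add_right inner_diff_right)
  moreover have "k = 0 \<or> k = 1 \<or> k = 2 \<or> k = 3" using assms(2) by auto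
  ultimately show ?thesis using * by (elim disjE) simp_all
qed

lemma flow_point_functional:
  assumes "skew s"
  shows "(\<Sum>k\<in>{0..3}. n k * (flow_point s \<bullet> v k)) =
    (\<Sum>k\<in>{0..3}. \<Sum>j\<in>{0..3}. conorm v k j * s k j * (n k - n j)) / 4"
proof -
  have "(\<Sum>k\<in>{0..3}. n k * (flow_point s \<bullet> v k)) =
      (\<Sum>k\<in>{0..3}. n k * (\<Sum>j\<in>{0..3}. conorm v k j * s k j)) / 2"
    by (simp add: flow_point_inner[OF assms] net_flow_def sum_divide_distrib[symmetric])
  then show ?thesis
    using double_sum_skew_mult[where p="conorm v" and s=s and A="{0..3}" and n=n, OF conorm_commute assms] by simp
qed

lemma flow_point_cong:
  assumes "\<And>k j. k \<in> {0..3} \<Longrightarrow> j \<in> {0..3} \<Longrightarrow> conorm v k j * s k j = conorm v k j * s' k j"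
  shows "flow_point s = flow_point s'"
proof -
  have "net_flow s k = net_flow s' k" if "k \<in> {0..3}" for k
    unfolding net_flow_def using assms that by (intro arg_cong[where f="\<lambda>x. x / 2"] sum.cong) auto
  then show ?thesis unfolding flow_point_def by simp
qed

end

locale obtuse_base = superbase +
  assumes obtuse: "is_obtuse v"
begin

lemma conorm_nonneg: "i \<in> {0..3} \<Longrightarrow> j \<in> {0..3} \<Longrightarrow> i \<noteq> j \<Longrightarrow> conorm v i j \<ge> 0"
  using obtuse by (auto simp: is_obtuse_def)

lemma cut_bounded_inner: "x \<in> cut_polytope \<Longrightarrow> cut_bounded (conorm v) (\<lambda>k. x \<bullet> v k)"
  by unfold_locales (auto simp: conorm_commute sum_inner_v_eq_0 cut_polytope_def)

lemma lovasz_bound_inner: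
  "x \<in> cut_polytope \<Longrightarrow>
    (\<Sum>k\<in>{0..3}. n k * (x \<bullet> v k)) \<le> (\<Sum>i\<in>{0..3}. \<Sum>j\<in>{0..3}. conorm v i j * \<bar>n i - n j\<bar>) / 4"
  using cut_bounded.lovasz_bound[OF cut_bounded_inner] .

text \<open>Selling's formula and the integrality of the coefficients turn the Lovasz bound into
  the Voronoi inequality.\<close>
lemma cut_polytope_subset_voronoi_domain: "cut_polytope \<subseteq> voronoi_domain L"
proof (intro subsetI)
  fix x assume x: "x \<in> cut_polytope"
  have "2 * (x \<bullet> y) \<le> y \<bullet> y" if yL: "y \<in> L" for y
  proof -
  obtain m where y: "y = (\<Sum>k\<in>{0..3}. real_of_int (m k) *\<^sub>R v k)"
    using yL by (rule obtain_int_coeffs)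
  have "x \<bullet> y \<le> (\<Sum>i\<in>{0..3}. \<Sum>j\<in>{0..3}. conorm v i j * \<bar>real_of_int (m i) - real_of_int (m j)\<bar>) / 4"
    unfolding y inner_sum_v by (rule lovasz_bound_inner[OF x])
  also have "\<dots> \<le> (\<Sum>i\<in>{0..3}. \<Sum>j\<in>{0..3}. conorm v i j * (real_of_int (m i) - real_of_int (m j))\<^sup>2) / 4"
  proof -
    have "conorm v i j * \<bar>real_of_int (m i) - real_of_int (m j)\<bar> \<le> conorm v i j * (real_of_int (m i) - real_of_int (m j))\<^sup>2"
      if "i \<in> {0..3}" "j \<in> {0..3}" for i j
      using conorm_nonneg[OF that] abs_le_square_of_int[of "m i - m j"]
      by (cases "i = j") (auto intro: mult_left_mono)
    then show ?thesis by (intro divide_right_mono sum_mono) auto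
  qed
  also have "\<dots> = (y \<bullet> y) / 2"
    using selling_formula[OF v0_eq, of "\<lambda>k. real_of_int (m k)"] by (simp add: y power2_norm_eq_inner)
  finally show "2 * (x \<bullet> y) \<le> y \<bullet> y" by simp
  qed
  then show "x \<in> voronoi_domain L" by (simp add: voronoi_domain_iff_inner)
qed

theorem voronoi_domain_eq_cut_polytope: "voronoi_domain L = cut_polytope"
  using voronoi_domain_subset_cut_polytope cut_polytope_subset_voronoi_domain by blast

lemma flow_point_in_voronoi_domain:
  assumes skew: "skew s" and bounded: "unit_bounded s"
  shows "flow_point s \<in> voronoi_domain L"
  unfolding voronoi_domain_eq_cut_polytope cut_polytope_def
proof (intro CollectI allI impI)
  fix S :: "nat set" assume S: "S \<subseteq> {0..3}"
  have "(\<Sum>k\<in>S. flow_point s \<bullet> v k) = (\<Sum>k\<in>{0..3}. of_bool (k \<in> S) * (flow_point s \<bullet> v k))"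
    using S by (simp add: Int_absorb1)
  also have "\<dots> = (\<Sum>k\<in>{0..3}. \<Sum>j\<in>{0..3}. conorm v k j * s k j * (of_bool (k \<in> S) - of_bool (j \<in> S))) / 4"
    by (rule flow_point_functional[OF skew])
  also have "\<dots> \<le> (\<Sum>k\<in>{0..3}. \<Sum>j\<in>{0..3}. conorm v k j * (of_bool (k \<in> S) - of_bool (j \<in> S))\<^sup>2) / 4"
  proof -
    have "conorm v k j * s k j * (of_bool (k \<in> S) - of_bool (j \<in> S)) \<le> conorm v k j * (of_bool (k \<in> S) - of_bool (j \<in> S))\<^sup>2"
      if "k \<in> {0..3}" "j \<in> {0..3}" for k j
    proof (cases "k = j")
      case False
      have "s k j * (of_bool (k \<in> S) - of_bool (j \<in> S)) \<le> (of_bool (k \<in> S) - of_bool (j \<in> S) :: real)\<^sup>2"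
        using bounded[unfolded unit_bounded_def, rule_format, of k j] by (auto simp: abs_le_iff)
      then show ?thesis using conorm_nonneg[OF that False] by (simp add: mult.assoc mult_left_mono)
    qed simp
    then show ?thesis by (intro divide_right_mono sum_mono) auto
  qed
  also have "\<dots> = cut_value (conorm v) S / 2" by (simp add: cut_value_def)
  finally show "(\<Sum>k\<in>S. flow_point s \<bullet> v k) \<le> cut_value (conorm v) S / 2" .
qed

end

section \<open>Vertices of the Voronoi domain\<close>

definition sign_flow :: "(nat \<Rightarrow> real) \<Rightarrow> nat \<Rightarrow> nat \<Rightarrow> real" where
  "sign_flow n i j = sgn (n i - n j)"

lemma skew_sign_flow: "skew (sign_flow n)"
  unfolding skew_def sign_flow_def by (simp add: sgn_minus[symmetric])

lemma unit_bounded_sign_flow: "unit_bounded (sign_flow n)"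
  unfolding unit_bounded_def sign_flow_def by (simp add: abs_sgn_eq)

lemma sgn_mult_self: "sgn (d::real) * d = \<bar>d\<bar>"
  by (cases "d < 0") (auto simp: sgn_real_def)

lemma sgn_mult_le_abs: "sgn (x::real) * d \<le> \<bar>d\<bar>"
  by (cases x rule: linorder_cases) (auto simp: sgn_real_def)

lemma double_sum_strict_mono:
  fixes f g :: "nat \<Rightarrow> nat \<Rightarrow> real"
  assumes le: "\<And>i j. i \<in> A \<Longrightarrow> j \<in> A \<Longrightarrow> f i j \<le> g i j" and fin: "finite A"
    and k: "k \<in> A" "j \<in> A" and lt: "f k j < g k j"
  shows "(\<Sum>i\<in>A. \<Sum>j\<in>A. f i j) < (\<Sum>i\<in>A. \<Sum>j\<in>A. g i j)"
proof (rule sum_strict_mono_ex1[OF fin])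
  show "\<forall>i\<in>A. (\<Sum>j\<in>A. f i j) \<le> (\<Sum>j\<in>A. g i j)" using le by (simp add: sum_mono)
  show "\<exists>i\<in>A. (\<Sum>j\<in>A. f i j) < (\<Sum>j\<in>A. g i j)"
  proof (rule bexI[OF _ k(1)], rule sum_strict_mono_ex1[OF fin])
    show "\<forall>x\<in>A. f k x \<le> g k x" using le k by auto
    show "\<exists>x\<in>A. f k x < g k x" using k lt by auto
  qed
qed

lemma permutes_0_3_monotone_eq_id:
  assumes \<pi>: "\<pi> permutes {0..3::nat}"
    and mono: "\<And>r r'. r \<in> {0..3} \<Longrightarrow> r' \<in> {0..3} \<Longrightarrow> r < r' \<Longrightarrow> \<pi> r < \<pi> r'"
    and r: "r \<in> {0..3}"
  shows "\<pi> r = r"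
proof -
  have "\<pi> 3 \<in> {0..3}" using permutes_in_image[OF \<pi>] by simp
  moreover have "\<pi> 0 < \<pi> 1" "\<pi> 1 < \<pi> 2" "\<pi> 2 < \<pi> 3" using mono by auto
  ultimately have "\<pi> 0 = 0" "\<pi> 1 = 1" "\<pi> 2 = 2" "\<pi> 3 = 3" by auto
  moreover have "r = 0 \<or> r = 1 \<or> r = 2 \<or> r = 3" using r by auto
  ultimately show ?thesis by auto
qed

lemma permutes_0_3_inversion:
  assumes \<rho>: "\<rho> permutes {0..3::nat}" and \<rho>': "\<rho>' permutes {0..3}" and ne: "\<rho> \<noteq> \<rho>'"
  shows "\<exists>k\<in>{0..3}. \<exists>j\<in>{0..3}. \<rho> k < \<rho> j \<and> \<rho>' j < \<rho>' k"
proof (rule ccontr)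
  assume "\<not> ?thesis"
  then have H: "\<And>k j. k \<in> {0..3} \<Longrightarrow> j \<in> {0..3} \<Longrightarrow> \<rho> k < \<rho> j \<Longrightarrow> \<rho>' k \<le> \<rho>' j"
    by (meson not_le)
  define \<pi> where "\<pi> = \<rho>' \<circ> inv \<rho>"
  have inv: "inv \<rho> permutes {0..3}" by (rule permutes_inv[OF \<rho>])
  have \<pi>: "\<pi> permutes {0..3}" unfolding \<pi>_def by (rule permutes_compose[OF inv \<rho>'])
  have "\<pi> r < \<pi> r'" if "r \<in> {0..3}" "r' \<in> {0..3}" "r < r'" for r r'
  proof -
    have "inv \<rho> r \<in> {0..3}" "inv \<rho> r' \<in> {0..3}" using permutes_in_image[OF inv] that by auto
    moreover have "\<rho> (inv \<rho> r) = r" "\<rho> (inv \<rho> r') = r'" using permutes_inverses(1)[OF \<rho>] by auto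
    ultimately have "\<rho>' (inv \<rho> r) \<le> \<rho>' (inv \<rho> r')" using H that by simp
    moreover have "inv \<rho> r \<noteq> inv \<rho> r'" using \<open>\<rho> (inv \<rho> r) = r\<close> \<open>\<rho> (inv \<rho> r') = r'\<close> that by (metis less_irrefl)
    then have "\<rho>' (inv \<rho> r) \<noteq> \<rho>' (inv \<rho> r')" using permutes_inj[OF \<rho>'] by (simp add: inj_eq)
    ultimately show ?thesis by (simp add: \<pi>_def)
  qed
  note \<pi>_id = permutes_0_3_monotone_eq_id[OF \<pi> this]
  have "\<rho>' k = \<rho> k" for k
  proof (cases "k \<in> {0..3}")
    case True
    then have "\<pi> (\<rho> k) = \<rho> k" using \<pi>_id permutes_in_image[OF \<rho>] by blast
    then show ?thesis using permutes_inverses(2)[OF \<rho>] by (simp add: \<pi>_def)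
  qed (use \<rho> \<rho>' in \<open>simp add: permutes_not_in\<close>)
  then show False using ne by auto
qed

context obtuse_base
begin

lemma voronoi_domain_polyhedron: "polyhedron (voronoi_domain L)"
proof -
  have "voronoi_domain L =
      (\<Inter>S\<in>Pow {0..3}. {x. (\<Sum>k\<in>S. v k) \<bullet> x \<le> cut_value (conorm v) S / 2})"
    by (auto simp: voronoi_domain_eq_cut_polytope cut_polytope_def inner_sum_left inner_sum_right inner_commute)
  also have "polyhedron \<dots>"
    by (intro polyhedron_Inter ballI) (auto simp only: polyhedron_halfspace_le)
  finally show ?thesis .
qed

lemma sign_flow_point_functional:
  "(\<Sum>k\<in>{0..3}. n k * (flow_point (sign_flow n) \<bullet> v k)) =
    (\<Sum>k\<in>{0..3}. \<Sum>j\<in>{0..3}. conorm v k j * \<bar>n k - n j\<bar>) / 4"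
  by (simp add: flow_point_functional[OF skew_sign_flow] sign_flow_def mult.assoc sgn_mult_self)

lemma sign_flow_point_in_voronoi_domain: "flow_point (sign_flow n) \<in> voronoi_domain L"
  by (rule flow_point_in_voronoi_domain[OF skew_sign_flow unit_bounded_sign_flow])

lemma functional_le_sign_flow_point:
  "y \<in> voronoi_domain L \<Longrightarrow>
    (\<Sum>k\<in>{0..3}. n k * (y \<bullet> v k)) \<le> (\<Sum>k\<in>{0..3}. n k * (flow_point (sign_flow n) \<bullet> v k))"
  unfolding sign_flow_point_functional
  by (rule lovasz_bound_inner) (simp add: voronoi_domain_eq_cut_polytope)

definition edges :: "(nat \<times> nat) set" where
  "edges = {(i, j). i < j \<and> j < 4 \<and> conorm v i j \<noteq> 0}"

lemma finite_edges: "finite edges"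
  by (rule finite_subset[of _ "{..<4} \<times> {..<4}"]) (auto simp: edges_def)

text \<open>On an edge where n does not decide the sign, the flow can be changed without
  changing the value of the functional, but the point moves.\<close>
lemma flow_point_edge_update:
  assumes ij: "(i, j) \<in> edges" and tie: "n i = n j"
  obtains s where "flow_point s \<in> voronoi_domain L"
    "(\<Sum>k\<in>{0..3}. n k * (flow_point s \<bullet> v k)) = (\<Sum>k\<in>{0..3}. n k * (flow_point (sign_flow n) \<bullet> v k))"
    "flow_point s \<noteq> flow_point (sign_flow n)"
proof -
  from ij have ij': "i < j" "j < 4" "conorm v i j \<noteq> 0" by (auto simp: edges_def)
  then have pos: "conorm v i j > 0" using conorm_nonneg[of i j] by force
  define s where "s = (\<lambda>k l. if k = i \<and> l = j then 1 else if k = j \<and> l = i then -1 else sign_flow n k l)"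
  have skew: "skew s" using ij' unfolding s_def skew_def sign_flow_def by (auto simp: sgn_minus[symmetric])
  have "unit_bounded s" unfolding s_def unit_bounded_def sign_flow_def by (auto simp: abs_sgn_eq)
  then have "flow_point s \<in> voronoi_domain L" by (rule flow_point_in_voronoi_domain[OF skew])
  moreover have "(\<Sum>k\<in>{0..3}. n k * (flow_point s \<bullet> v k)) = (\<Sum>k\<in>{0..3}. n k * (flow_point (sign_flow n) \<bullet> v k))"
    unfolding flow_point_functional[OF skew] flow_point_functional[OF skew_sign_flow]
    using tie by (intro arg_cong[where f="\<lambda>x. x / 4"] sum.cong refl) (auto simp: s_def)
  moreover have "net_flow s i = net_flow (sign_flow n) i + conorm v i j / 2"
  proof -
    have "(\<Sum>l\<in>{0..3}. conorm v i l * s i l) =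
        (\<Sum>l\<in>{0..3}. conorm v i l * sign_flow n i l + (if l = j then conorm v i j else 0))"
      using ij' tie by (intro sum.cong refl) (auto simp: s_def sign_flow_def)
    also have "\<dots> = (\<Sum>l\<in>{0..3}. conorm v i l * sign_flow n i l) + conorm v i j"
      using ij' by (simp add: sum.distrib)
    finally show ?thesis by (simp add: net_flow_def add_divide_distrib)
  qed
  then have "flow_point s \<bullet> v i \<noteq> flow_point (sign_flow n) \<bullet> v i"
    using ij' pos flow_point_inner[OF skew, of i] flow_point_inner[OF skew_sign_flow, of i n] by simp
  then have "flow_point s \<noteq> flow_point (sign_flow n)" by metis
  ultimately show ?thesis by (rule that)
qed

text \<open>A vertex is the unique maximizer of some functional y \<mapsto> y \<bullet> (Sum n k v k), and
  the sign flow of n attains the maximum.\<close>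
lemma vertex_eq_sign_flow_point:
  assumes x: "x extreme_point_of voronoi_domain L"
  obtains n where "x = flow_point (sign_flow n)" "\<And>i j. (i, j) \<in> edges \<Longrightarrow> n i \<noteq> n j"
proof -
  have "{x} exposed_face_of voronoi_domain L"
    using x exposed_face_of_polyhedron[OF voronoi_domain_polyhedron] by (simp add: face_of_singleton)
  then obtain a b where sub: "voronoi_domain L \<subseteq> {y. a \<bullet> y \<le> b}"
    and eq: "{x} = voronoi_domain L \<inter> {y. a \<bullet> y = b}"
    unfolding exposed_face_of_def by blast
  obtain n where a: "a = (\<Sum>k\<in>{0..3}. n k *\<^sub>R v k)" using exists_coeffs by blast
  have xV: "x \<in> voronoi_domain L" and ax: "a \<bullet> x = b" using eq by auto
  have uniq: "y = x" if y: "y \<in> voronoi_domain L" and ge: "a \<bullet> y \<ge> a \<bullet> x" for y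
  proof -
    have "a \<bullet> y \<le> b" using sub y by blast
    with ge ax have "y \<in> voronoi_domain L \<inter> {y. a \<bullet> y = b}" using y by simp
    then show ?thesis using eq by blast
  qed
  have a_inner: "a \<bullet> y = (\<Sum>k\<in>{0..3}. n k * (y \<bullet> v k))" for y
    by (simp add: a sum_v_inner)
  have "flow_point (sign_flow n) = x"
    using functional_le_sign_flow_point[OF xV, of n]
    by (intro uniq sign_flow_point_in_voronoi_domain) (simp add: a_inner)
  moreover have "n i \<noteq> n j" if "(i, j) \<in> edges" for i j
  proof
    assume "n i = n j"
    with that obtain s where "flow_point s \<in> voronoi_domain L"
      "(\<Sum>k\<in>{0..3}. n k * (flow_point s \<bullet> v k)) = (\<Sum>k\<in>{0..3}. n k * (flow_point (sign_flow n) \<bullet> v k))"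
      "flow_point s \<noteq> flow_point (sign_flow n)"
      by (rule flow_point_edge_update)
    then show False
      using uniq[of "flow_point s"] \<open>flow_point (sign_flow n) = x\<close> by (simp add: a_inner)
  qed
  ultimately show ?thesis using that by metis
qed

definition edge_flow :: "(nat \<times> nat \<Rightarrow> real) \<Rightarrow> nat \<Rightarrow> nat \<Rightarrow> real" where
  "edge_flow e i j = (if (i, j) \<in> edges then e (i, j) else if (j, i) \<in> edges then - e (j, i) else 0)"

lemma vertices_subset_edge_sign_points:
  "{x. x extreme_point_of voronoi_domain L} \<subseteq>
     (\<lambda>e. flow_point (edge_flow e)) ` (PiE edges (\<lambda>_. {-1, 1}))"
proof
  fix x assume "x \<in> {x. x extreme_point_of voronoi_domain L}"
  then obtain n where x: "x = flow_point (sign_flow n)" and ne: "\<And>i j. (i, j) \<in> edges \<Longrightarrow> n i \<noteq> n j"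
    using vertex_eq_sign_flow_point by blast
  define e where "e = restrict (\<lambda>(i, j). sgn (n i - n j)) edges"
  have "e \<in> PiE edges (\<lambda>_. {-1, 1})"
    unfolding e_def using ne by (auto simp: PiE_iff sgn_real_def)
  moreover have "flow_point (edge_flow e) = x" unfolding x
  proof (rule flow_point_cong)
    fix k j :: nat assume kj: "k \<in> {0..3}" "j \<in> {0..3}"
    have "conorm v k j = 0 \<or> k = j" if "(k, j) \<notin> edges" "(j, k) \<notin> edges"
      using that kj conorm_commute[of v k j] by (cases "k < j") (auto simp: edges_def)
    then show "conorm v k j * edge_flow e k j = conorm v k j * sign_flow n k j"
      by (auto simp: edge_flow_def e_def sign_flow_def sgn_minus[symmetric])
  qed
  ultimately show "x \<in> (\<lambda>e. flow_point (edge_flow e)) ` (PiE edges (\<lambda>_. {-1, 1}))" by blast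
qed

lemma finite_vertices: "finite {x. x extreme_point_of voronoi_domain L}"
  by (rule finite_subset[OF vertices_subset_edge_sign_points]) (intro finite_imageI finite_PiE finite_edges; simp)

lemma card_vertices_le: "card {x. x extreme_point_of voronoi_domain L} \<le> 2 ^ card edges"
proof -
  have "card {x. x extreme_point_of voronoi_domain L} \<le>
      card ((\<lambda>e. flow_point (edge_flow e)) ` (PiE edges (\<lambda>_. {-1, 1::real})))"
    by (rule card_mono[OF _ vertices_subset_edge_sign_points]) (intro finite_imageI finite_PiE finite_edges; simp)
  also have "\<dots> \<le> card (PiE edges (\<lambda>_. {-1, 1::real}))"
    by (rule card_image_le) (intro finite_PiE finite_edges; simp)
  also have "\<dots> = 2 ^ card edges" using finite_edges by (simp add: card_PiE numeral_2_eq_2)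
  finally show ?thesis .
qed

definition order_weight :: "(nat \<Rightarrow> nat) \<Rightarrow> nat \<Rightarrow> real" where
  "order_weight \<rho> k = - real (\<rho> k)"

definition order_vertex :: "(nat \<Rightarrow> nat) \<Rightarrow> vec3" where
  "order_vertex \<rho> = flow_point (sign_flow (order_weight \<rho>))"

lemma order_vertex_in_voronoi_domain: "order_vertex \<rho> \<in> voronoi_domain L"
  unfolding order_vertex_def by (rule sign_flow_point_in_voronoi_domain)

lemma order_vertex_unique_maximizer:
  assumes \<rho>: "\<rho> permutes {0..3}" and y: "y \<in> voronoi_domain L"
    and ge: "(\<Sum>k\<in>{0..3}. order_weight \<rho> k * (y \<bullet> v k)) \<ge>
      (\<Sum>k\<in>{0..3}. order_weight \<rho> k * (order_vertex \<rho> \<bullet> v k))"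
  shows "y = order_vertex \<rho>"
proof -
  define \<sigma> where "\<sigma> = inv \<rho>"
  have \<sigma>: "\<sigma> permutes {0..3}" unfolding \<sigma>_def by (rule permutes_inv[OF \<rho>])
  have \<rho>\<sigma>: "\<rho> (\<sigma> r) = r" for r unfolding \<sigma>_def using permutes_inverses(1)[OF \<rho>] by simp
  have mono: "order_weight \<rho> (\<sigma> 0) > order_weight \<rho> (\<sigma> 1)" "order_weight \<rho> (\<sigma> 1) > order_weight \<rho> (\<sigma> 2)"
    "order_weight \<rho> (\<sigma> 2) > order_weight \<rho> (\<sigma> 3)"
    by (simp_all add: order_weight_def \<rho>\<sigma>)
  have tight: "t (\<sigma> 0) = cut_value (conorm v) (\<sigma> ` {0}) / 2"
      "t (\<sigma> 0) + t (\<sigma> 1) = cut_value (conorm v) (\<sigma> ` {0, 1}) / 2"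
      "t (\<sigma> 0) + t (\<sigma> 1) + t (\<sigma> 2) = cut_value (conorm v) (\<sigma> ` {0, 1, 2}) / 2"
    if "t = (\<lambda>k. z \<bullet> v k)" "z \<in> voronoi_domain L"
      "(\<Sum>k\<in>{0..3}. order_weight \<rho> k * t k) \<ge> (\<Sum>k\<in>{0..3}. order_weight \<rho> k * (order_vertex \<rho> \<bullet> v k))" for z t
    using cut_bounded.lovasz_bound_tight[OF cut_bounded_inner \<sigma> mono] that
    by (simp_all add: order_vertex_def sign_flow_point_functional voronoi_domain_eq_cut_polytope)
  note ty = tight[OF refl y ge] and tv = tight[OF refl order_vertex_in_voronoi_domain order_refl]
  have "y \<bullet> v (\<sigma> r) = order_vertex \<rho> \<bullet> v (\<sigma> r)" if "r \<in> {0..3}" for r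
  proof -
    have "r = 0 \<or> r = 1 \<or> r = 2 \<or> r = 3" using that by auto
    then show ?thesis
      using ty tv sum_inner_v_eq_0[of y, unfolded sum_permutes_0_3[OF \<sigma>]]
        sum_inner_v_eq_0[of "order_vertex \<rho>", unfolded sum_permutes_0_3[OF \<sigma>]] by auto
  qed
  note all = this
  have "y \<bullet> v k = order_vertex \<rho> \<bullet> v k" if "k \<in> {0..3}" for k
  proof -
    have "\<sigma> (\<rho> k) = k" unfolding \<sigma>_def using permutes_inverses(2)[OF \<rho>] by simp
    moreover have "\<rho> k \<in> {0..3}" using permutes_in_image[OF \<rho>] that by simp
    ultimately show ?thesis using all by metis
  qed
  then show ?thesis by (intro eq_if_inner_basis_eq) auto
qed

lemma order_vertex_extreme:
  assumes \<rho>: "\<rho> permutes {0..3}"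
  shows "order_vertex \<rho> extreme_point_of voronoi_domain L"
proof (rule extreme_point_of_Int_supporting_hyperplane_le)
  define a where "a = (\<Sum>k\<in>{0..3}. order_weight \<rho> k *\<^sub>R v k)"
  have a_inner: "a \<bullet> y = (\<Sum>k\<in>{0..3}. order_weight \<rho> k * (y \<bullet> v k))" for y
    by (simp add: a_def sum_v_inner)
  show "a \<bullet> y \<le> a \<bullet> order_vertex \<rho>" if "y \<in> voronoi_domain L" for y
    unfolding a_inner order_vertex_def by (rule functional_le_sign_flow_point[OF that])
  show "voronoi_domain L \<inter> {y. a \<bullet> y = a \<bullet> order_vertex \<rho>} = {order_vertex \<rho>}"
  proof (intro equalityI subsetI)
    fix y assume "y \<in> voronoi_domain L \<inter> {y. a \<bullet> y = a \<bullet> order_vertex \<rho>}"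
    then show "y \<in> {order_vertex \<rho>}"
      using order_vertex_unique_maximizer[OF \<rho>, of y] by (simp add: a_inner)
  qed (simp add: order_vertex_in_voronoi_domain)
qed

lemma order_vertex_inj:
  assumes pos: "\<And>i j. i \<in> {0..3} \<Longrightarrow> j \<in> {0..3} \<Longrightarrow> i \<noteq> j \<Longrightarrow> conorm v i j > 0"
  shows "inj_on order_vertex {\<rho>. \<rho> permutes {0..3}}"
proof (rule inj_onI, rule ccontr)
  fix \<rho> \<rho>' assume \<rho>: "\<rho> \<in> {\<rho>. \<rho> permutes {0..3}}" and \<rho>': "\<rho>' \<in> {\<rho>. \<rho> permutes {0..3}}"
    and eq: "order_vertex \<rho> = order_vertex \<rho>'" and ne: "\<rho> \<noteq> \<rho>'"
  obtain k j where kj: "k \<in> {0..3}" "j \<in> {0..3}" "\<rho> k < \<rho> j" "\<rho>' j < \<rho>' k"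
    using permutes_0_3_inversion \<rho> \<rho>' ne by blast
  define s' where "s' = sign_flow (order_weight \<rho>')"
  have "(\<Sum>k\<in>{0..3}. order_weight \<rho> k * (order_vertex \<rho>' \<bullet> v k)) =
      (\<Sum>i\<in>{0..3}. \<Sum>j\<in>{0..3}. conorm v i j * s' i j * (order_weight \<rho> i - order_weight \<rho> j)) / 4"
    unfolding order_vertex_def s'_def by (rule flow_point_functional[OF skew_sign_flow])
  also have "\<dots> < (\<Sum>i\<in>{0..3}. \<Sum>j\<in>{0..3}. conorm v i j * \<bar>order_weight \<rho> i - order_weight \<rho> j\<bar>) / 4"
  proof (intro divide_strict_right_mono double_sum_strict_mono)
    fix i j :: nat assume ij: "i \<in> {0..3}" "j \<in> {0..3}"
    show "conorm v i j * s' i j * (order_weight \<rho> i - order_weight \<rho> j) \<le>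
        conorm v i j * \<bar>order_weight \<rho> i - order_weight \<rho> j\<bar>"
    proof (cases "i = j")
      case False
      have "s' i j * (order_weight \<rho> i - order_weight \<rho> j) \<le> \<bar>order_weight \<rho> i - order_weight \<rho> j\<bar>"
        unfolding s'_def sign_flow_def by (rule sgn_mult_le_abs)
      then show ?thesis using conorm_nonneg[OF ij False] by (simp add: mult.assoc mult_left_mono)
    qed simp
  next
    have "conorm v k j > 0" using pos kj by auto
    moreover have "s' k j = -1" "order_weight \<rho> k - order_weight \<rho> j > 0"
      using kj by (simp_all add: s'_def sign_flow_def order_weight_def)
    ultimately show "conorm v k j * s' k j * (order_weight \<rho> k - order_weight \<rho> j) <
        conorm v k j * \<bar>order_weight \<rho> k - order_weight \<rho> j\<bar>"
      by simp
  qed (use kj in auto)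
  also have "\<dots> = (\<Sum>k\<in>{0..3}. order_weight \<rho> k * (order_vertex \<rho> \<bullet> v k))"
    by (simp add: order_vertex_def sign_flow_point_functional)
  finally show False using eq by simp
qed

lemma card_vertices_ge:
  assumes pos: "\<And>i j. i \<in> {0..3} \<Longrightarrow> j \<in> {0..3} \<Longrightarrow> i \<noteq> j \<Longrightarrow> conorm v i j > 0"
  shows "card {x. x extreme_point_of voronoi_domain L} \<ge> 24"
proof -
  have "card {\<rho>. \<rho> permutes {0..3::nat}} = 24"
    using card_permutations[of "{0..3::nat}" 4] by (simp add: eval_nat_numeral)
  then have "card (order_vertex ` {\<rho>. \<rho> permutes {0..3::nat}}) = 24"
    using card_image[OF order_vertex_inj[OF pos]] by simp
  moreover have "card (order_vertex ` {\<rho>. \<rho> permutes {0..3::nat}}) \<le> card {x. x extreme_point_of voronoi_domain L}"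
    by (rule card_mono[OF finite_vertices]) (use order_vertex_extreme in auto)
  ultimately show ?thesis by simp
qed

lemma voronoi_domain_bounded: "bounded (voronoi_domain L)"
proof -
  define B where "B = (\<Sum>k\<in>{1,2,3}. \<bar>cut_value (conorm v) {k}\<bar> + \<bar>cut_value (conorm v) ({0..3} - {k})\<bar>)"
  have inner_bound: "\<bar>x \<bullet> v k\<bar> \<le> \<bar>cut_value (conorm v) {k}\<bar> + \<bar>cut_value (conorm v) ({0..3} - {k})\<bar>"
    if x: "x \<in> voronoi_domain L" and k: "k \<in> {0..3}" for x k
  proof -
    have cuts: "(\<Sum>j\<in>S. x \<bullet> v j) \<le> cut_value (conorm v) S / 2" if "S \<subseteq> {0..3}" for S
      using x that by (simp add: voronoi_domain_eq_cut_polytope cut_polytope_def)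
    have "(\<Sum>j\<in>{k}. x \<bullet> v j) \<le> cut_value (conorm v) {k} / 2"
      "(\<Sum>j\<in>{0..3} - {k}. x \<bullet> v j) \<le> cut_value (conorm v) ({0..3} - {k}) / 2"
      using k by (intro cuts; auto)+
    moreover have "(\<Sum>j\<in>{0..3} - {k}. x \<bullet> v j) = - (x \<bullet> v k)"
      using sum_inner_v_eq_0[of x] sum.remove[of "{0..3}" k "\<lambda>j. x \<bullet> v j"] k by simp
    ultimately have "x \<bullet> v k \<le> cut_value (conorm v) {k} / 2"
      "- (x \<bullet> v k) \<le> cut_value (conorm v) ({0..3} - {k}) / 2"
      by simp_all
    then show ?thesis
      using abs_ge_self[of "cut_value (conorm v) {k}"] abs_ge_self[of "cut_value (conorm v) ({0..3} - {k})"]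
        abs_ge_zero[of "cut_value (conorm v) {k}"] abs_ge_zero[of "cut_value (conorm v) ({0..3} - {k})"]
      unfolding abs_le_iff by (intro conjI) linarith+
  qed
  obtain g where g: "linear g" "g \<circ> (*v) basis_rows = id"
    using linear_injective_left_inverse[OF matrix_vector_mul_linear inj_basis_rows] by blast
  have "bounded ((*v) basis_rows ` voronoi_domain L)"
    unfolding bounded_iff
  proof (intro exI ballI)
    fix y assume "y \<in> (*v) basis_rows ` voronoi_domain L"
    then obtain x where x: "x \<in> voronoi_domain L" and y: "y = basis_rows *v x" by blast
    have "norm y \<le> (\<Sum>i\<in>UNIV. \<bar>y $ i\<bar>)" by (rule norm_le_l1_cart)
    also have "\<dots> = \<bar>x \<bullet> v 1\<bar> + \<bar>x \<bullet> v 2\<bar> + \<bar>x \<bullet> v 3\<bar>"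
      by (simp add: sum_3 y basis_rows_mult vector_3 inner_commute)
    also have "\<dots> \<le> B" unfolding B_def using inner_bound[OF x, of 1] inner_bound[OF x, of 2] inner_bound[OF x, of 3]
      by simp
    finally show "norm y \<le> B" .
  qed
  then have "bounded (g ` ((*v) basis_rows ` voronoi_domain L))"
    by (rule bounded_linear_image) (simp add: g(1) linear_conv_bounded_linear[symmetric])
  moreover have "g ` ((*v) basis_rows ` voronoi_domain L) = voronoi_domain L"
    using g(2) by (simp add: image_comp)
  ultimately show ?thesis by simp
qed

lemma voronoi_domain_compact: "compact (voronoi_domain L)"
  using voronoi_domain_bounded polyhedron_imp_closed[OF voronoi_domain_polyhedron]
  by (simp add: compact_eq_bounded_closed)

lemma voronoi_domain_convex: "convex (voronoi_domain L)"
  by (rule polyhedron_imp_convex[OF voronoi_domain_polyhedron])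

end

section \<open>Counting vertices\<close>

definition minimal_nonempty :: "'a set set \<Rightarrow> 'a set set" where
  "minimal_nonempty A = {F \<in> A. F \<noteq> {} \<and> (\<forall>G\<in>A. G \<subseteq> F \<longrightarrow> G = {} \<or> G = F)}"

lemma order_iso_minimal_nonempty:
  assumes bij: "bij_betw \<phi> A B" and ord: "\<And>F G. F \<in> A \<Longrightarrow> G \<in> A \<Longrightarrow> F \<subseteq> G \<longleftrightarrow> \<phi> F \<subseteq> \<phi> G"
    and empty: "{} \<in> A" "{} \<in> B"
  shows "\<phi> ` minimal_nonempty A = minimal_nonempty B"
proof -
  have img: "\<phi> F \<in> B" if "F \<in> A" for F using bij that by (auto simp: bij_betw_def)
  have surj: "\<exists>F\<in>A. G = \<phi> F" if "G \<in> B" for G using bij that by (auto simp: bij_betw_def)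
  have inj: "F = G" if "F \<in> A" "G \<in> A" "\<phi> F = \<phi> G" for F G
    using bij that by (auto simp: bij_betw_def inj_on_def)
  have \<phi>_empty: "\<phi> {} = {}"
  proof -
    obtain F where "F \<in> A" "{} = \<phi> F" using surj[OF empty(2)] by blast
    then show ?thesis using ord[OF empty(1), of F] by auto
  qed
  have nonempty_iff: "\<phi> F \<noteq> {} \<longleftrightarrow> F \<noteq> {}" if "F \<in> A" for F
    using inj[OF that empty(1)] \<phi>_empty by auto
  show ?thesis
  proof (intro equalityI subsetI)
    fix G assume "G \<in> \<phi> ` minimal_nonempty A"
    then obtain F where F: "F \<in> A" "F \<noteq> {}" "\<And>H. H \<in> A \<Longrightarrow> H \<subseteq> F \<Longrightarrow> H = {} \<or> H = F"
      and G: "G = \<phi> F"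
      by (auto simp: minimal_nonempty_def)
    have "H = {} \<or> H = G" if H: "H \<in> B" "H \<subseteq> G" for H
    proof -
      obtain H' where H': "H' \<in> A" "H = \<phi> H'" using surj[OF H(1)] by blast
      then have "H' = {} \<or> H' = F" using F(3) ord[OF H'(1) F(1)] H(2) G by blast
      then show ?thesis using \<phi>_empty H' G by auto
    qed
    then show "G \<in> minimal_nonempty B"
      using img[OF F(1)] nonempty_iff[OF F(1)] F(2) G by (auto simp: minimal_nonempty_def)
  next
    fix G assume "G \<in> minimal_nonempty B"
    then have G: "G \<in> B" "G \<noteq> {}" and min: "\<And>H. H \<in> B \<Longrightarrow> H \<subseteq> G \<Longrightarrow> H = {} \<or> H = G"
      by (auto simp: minimal_nonempty_def)
    obtain F where F: "F \<in> A" "G = \<phi> F" using surj[OF G(1)] by blast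
    have "H = {} \<or> H = F" if "H \<in> A" "H \<subseteq> F" for H
      using min[OF img[OF that(1)]] ord[OF that(1) F(1)] that(2) F inj[OF that(1) F(1)]
        inj[OF that(1) empty(1)] \<phi>_empty by auto
    then have "F \<in> minimal_nonempty A"
      using F G(2) nonempty_iff[OF F(1)] by (auto simp: minimal_nonempty_def)
    then show "G \<in> \<phi> ` minimal_nonempty A" using F by blast
  qed
qed

lemma minimal_nonempty_faces:
  fixes P :: "'a::euclidean_space set"
  assumes "compact P" "convex P"
  shows "minimal_nonempty {F. F face_of P} = (\<lambda>x. {x}) ` {x. x extreme_point_of P}"
proof (intro equalityI subsetI)
  fix F assume "F \<in> minimal_nonempty {F. F face_of P}"
  then have F: "F face_of P" "F \<noteq> {}" and min: "\<And>G. G face_of P \<Longrightarrow> G \<subseteq> F \<Longrightarrow> G = {} \<or> G = F"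
    by (auto simp: minimal_nonempty_def)
  have "compact F"
    using face_of_imp_compact[OF assms(2) assms(1) F(1)] .
  then obtain x where x: "x extreme_point_of F"
    using extreme_point_exists_convex[OF _ face_of_imp_convex[OF F(1)] F(2)] by blast
  then have "{x} face_of P"
    using face_of_trans[OF _ F(1)] by (simp add: face_of_singleton[symmetric])
  moreover have "{x} \<subseteq> F" using x by (simp add: extreme_point_of_def)
  ultimately have "F = {x}" using min by blast
  then show "F \<in> (\<lambda>x. {x}) ` {x. x extreme_point_of P}"
    using \<open>{x} face_of P\<close> by (simp add: face_of_singleton)
qed (auto simp: minimal_nonempty_def face_of_singleton subset_singleton_iff)

lemma comb_equiv_card_vertices:
  assumes equiv: "comb_equiv P Q" and P: "compact P" "convex P" and Q: "compact Q" "convex Q"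
  shows "card {x. x extreme_point_of P} = card {x. x extreme_point_of Q}"
proof -
  obtain \<phi> where bij: "bij_betw \<phi> {F. F face_of P} {G. G face_of Q}"
    and ord: "\<And>F G. F face_of P \<Longrightarrow> G face_of P \<Longrightarrow> F \<subseteq> G \<longleftrightarrow> \<phi> F \<subseteq> \<phi> G"
    using equiv unfolding comb_equiv_def by blast
  have "\<phi> ` minimal_nonempty {F. F face_of P} = minimal_nonempty {G. G face_of Q}"
    using bij ord by (intro order_iso_minimal_nonempty) auto
  moreover have "inj_on \<phi> (minimal_nonempty {F. F face_of P})"
    using bij by (auto simp: bij_betw_def minimal_nonempty_def intro: inj_on_subset)
  ultimately have "card (minimal_nonempty {F. F face_of P}) = card (minimal_nonempty {G. G face_of Q})"
    by (metis card_image)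
  moreover have "card (minimal_nonempty {F. F face_of S}) = card {x. x extreme_point_of S}"
    if "compact S" "convex S" for S :: "vec3 set"
    unfolding minimal_nonempty_faces[OF that] by (rule card_image) (simp add: inj_on_def)
  ultimately show ?thesis using P Q by simp
qed

lemma extreme_point_of_convex_hull_strict_max:
  fixes S :: "vec3 set"
  assumes "finite S" "x \<in> S" "\<And>y. y \<in> S \<Longrightarrow> y \<noteq> x \<Longrightarrow> f \<bullet> y < f \<bullet> x"
  shows "x extreme_point_of convex hull S"
proof -
  have "convex hull (S - {x}) \<subseteq> {y. f \<bullet> y < f \<bullet> x}"
    by (rule hull_minimal) (use assms(3) in \<open>auto intro: convex_halfspace_lt\<close>)
  then have "x \<notin> convex hull (S - {x})" by auto
  from extreme_point_of_convex_hull_insert[OF _ this] assms(1,2)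
  show ?thesis by (simp add: insert_absorb)
qed

definition vec_of_triple :: "real \<times> real \<times> real \<Rightarrow> vec3" where
  "vec_of_triple t = (case t of (a, b, c) \<Rightarrow> vector [a, b, c])"

definition hrd_vertices :: "(real \<times> real \<times> real) list" where
  "hrd_vertices = [(-1,-1,-2), (-1,-1,2), (-1,1,-2), (-1,1,2), (1,-1,-2), (1,-1,2), (1,1,-2), (1,1,2),
     (0,0,3), (0,0,-3), (-2,0,-1), (-2,0,1), (2,0,-1), (2,0,1), (0,-2,-1), (0,-2,1), (0,2,-1), (0,2,1)]"

text \<open>A direction in which the given vertex is the unique maximum over the 18 points.\<close>
definition hrd_support :: "real \<times> real \<times> real \<Rightarrow> real \<times> real \<times> real" where
  "hrd_support t = (case t of (a, b, c) \<Rightarrow>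
     if \<bar>c\<bar> = 2 then (a, b, c / 2) else if a = 0 \<and> b = 0 then (0, 0, c / 3) else (a, b, c))"

definition inner_triple :: "real \<times> real \<times> real \<Rightarrow> real \<times> real \<times> real \<Rightarrow> real" where
  "inner_triple s t = (case s of (a, b, c) \<Rightarrow> case t of (d, e, f) \<Rightarrow> a * d + b * e + c * f)"

lemma hrd_support_strict_max:
  "\<forall>s\<in>set hrd_vertices. \<forall>t\<in>set hrd_vertices. t \<noteq> s \<longrightarrow>
     inner_triple (hrd_support s) t < inner_triple (hrd_support s) s"
  by (simp add: hrd_vertices_def hrd_support_def inner_triple_def)

lemma inner_vec_of_triple: "vec_of_triple s \<bullet> vec_of_triple t = inner_triple s t"
  by (cases s; cases t) (simp add: vec_of_triple_def inner_triple_def inner_vec_def sum_3 vector_3)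

lemma inj_vec_of_triple: "inj vec_of_triple"
  unfolding inj_def by (auto simp: vec_of_triple_def vec_eq_iff forall_3 vector_3 split: prod.splits)

lemma hexa_rhombic_dodecahedron_eq: "hexa_rhombic_dodecahedron = convex hull (vec_of_triple ` set hrd_vertices)"
proof -
  have "({vector [a, b, c] | a b c :: real. a \<in> {-1,1} \<and> b \<in> {-1,1} \<and> c \<in> {-2,2}}
      \<union> {vector [0, 0, 3], vector [0, 0, -3]}
      \<union> {vector [a, 0, c] | a c :: real. a \<in> {-2,2} \<and> c \<in> {-1,1}}
      \<union> {vector [0, b, c] | b c :: real. b \<in> {-2,2} \<and> c \<in> {-1,1}}) = vec_of_triple ` set hrd_vertices"
    by (auto simp: hrd_vertices_def vec_of_triple_def)
  then show ?thesis by (simp add: hexa_rhombic_dodecahedron_def)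
qed

lemma hexa_rhombic_dodecahedron_vertices:
  "{x. x extreme_point_of hexa_rhombic_dodecahedron} = vec_of_triple ` set hrd_vertices"
proof
  show "{x. x extreme_point_of hexa_rhombic_dodecahedron} \<subseteq> vec_of_triple ` set hrd_vertices"
    unfolding hexa_rhombic_dodecahedron_eq using extreme_point_of_convex_hull by auto
  show "vec_of_triple ` set hrd_vertices \<subseteq> {x. x extreme_point_of hexa_rhombic_dodecahedron}"
  proof
    fix x assume "x \<in> vec_of_triple ` set hrd_vertices"
    then obtain s where s: "s \<in> set hrd_vertices" "x = vec_of_triple s" by blast
    have "x extreme_point_of convex hull (vec_of_triple ` set hrd_vertices)"
    proof (rule extreme_point_of_convex_hull_strict_max[where f="vec_of_triple (hrd_support s)"])
      fix y assume "y \<in> vec_of_triple ` set hrd_vertices" "y \<noteq> x"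
      then obtain t where t: "t \<in> set hrd_vertices" "y = vec_of_triple t" "t \<noteq> s" using s by auto
      show "vec_of_triple (hrd_support s) \<bullet> y < vec_of_triple (hrd_support s) \<bullet> x"
        using hrd_support_strict_max s t by (simp add: inner_vec_of_triple)
    qed (use s in auto)
    then show "x \<in> {x. x extreme_point_of hexa_rhombic_dodecahedron}" by (simp add: hexa_rhombic_dodecahedron_eq)
  qed
qed

lemma card_hexa_rhombic_dodecahedron_vertices:
  "card {x. x extreme_point_of hexa_rhombic_dodecahedron} = 18"
proof -
  have "card (vec_of_triple ` set hrd_vertices) = card (set hrd_vertices)"
    by (rule card_image, rule inj_on_subset[OF inj_vec_of_triple]) simp
  also have "\<dots> = 18" by (simp add: hrd_vertices_def)
  finally show ?thesis by (simp add: hexa_rhombic_dodecahedron_vertices)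
qed

lemma hexa_rhombic_dodecahedron_compact: "compact hexa_rhombic_dodecahedron"
  unfolding hexa_rhombic_dodecahedron_eq by (rule finite_imp_compact_convex_hull) simp

lemma hexa_rhombic_dodecahedron_convex: "convex hexa_rhombic_dodecahedron"
  unfolding hexa_rhombic_dodecahedron_eq by simp

lemma pairs_less_4: "{(i, j). i < j \<and> j < (4::nat)} = {(0,1),(0,2),(0,3),(1,2),(1,3),(2,3)}"
  by (auto simp: less_Suc_eq numeral_eq_Suc)

context obtuse_base
begin

theorem card_zero_conorms_V2:
  assumes V2: "voronoi_type_V2 L"
  shows "card {(i, j). i < j \<and> j < (4::nat) \<and> conorm v i j = 0} = 1"
proof -
  have vertices: "card {x. x extreme_point_of voronoi_domain L} = 18"
    using comb_equiv_card_vertices[OF V2[unfolded voronoi_type_V2_def] voronoi_domain_compact voronoi_domain_convex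
        hexa_rhombic_dodecahedron_compact hexa_rhombic_dodecahedron_convex]
    by (simp add: card_hexa_rhombic_dodecahedron_vertices)
  have sub: "edges \<subseteq> {(i, j). i < j \<and> j < (4::nat)}" by (auto simp: edges_def)
  then have "card edges \<le> 6" using card_mono[OF _ sub] by (simp add: pairs_less_4)
  moreover have "card edges \<noteq> 6"
  proof
    assume "card edges = 6"
    then have all: "edges = {(i, j). i < j \<and> j < (4::nat)}"
      using card_subset_eq[OF _ sub] by (simp add: pairs_less_4)
    have "conorm v i j > 0" if "i \<in> {0..3}" "j \<in> {0..3}" "i \<noteq> j" for i j
    proof -
      have "(min i j, max i j) \<in> edges" using all that by auto
      then have "conorm v (min i j) (max i j) \<noteq> 0" by (simp add: edges_def)
      then have "conorm v i j \<noteq> 0" by (cases "i \<le> j") (auto simp: min_def max_def conorm_commute)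
      then show ?thesis using conorm_nonneg[OF that] by simp
    qed
    then show False using card_vertices_ge vertices by fastforce
  qed
  moreover have "card edges > 4"
  proof (rule ccontr)
    assume "\<not> card edges > 4"
    then have "(2::nat) ^ card edges \<le> 2 ^ 4" by (intro power_increasing) simp_all
    then show False using card_vertices_le vertices by simp
  qed
  ultimately have "card edges = 5" by linarith
  moreover have "{(i, j). i < j \<and> j < (4::nat) \<and> conorm v i j = 0} = {(i, j). i < j \<and> j < (4::nat)} - edges"
    by (auto simp: edges_def)
  ultimately show ?thesis
    using card_Diff_subset[OF finite_edges sub] by (simp add: pairs_less_4)
qed

end

section \<open>Lattice bases and Selling reduction\<close>

lemma lattice_gen_swap12: "lattice_gen a b c = lattice_gen b a c"
  unfolding lattice_gen_def by (auto; metis add.commute add.left_commute)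

lemma lattice_gen_swap23: "lattice_gen a b c = lattice_gen a c b"
  unfolding lattice_gen_def by (auto; metis add.commute add.left_commute add.assoc)

lemma lattice_gen_replace: "lattice_gen (-(a+b+c)) b c = lattice_gen a b c"
proof
  show "lattice_gen (-(a+b+c)) b c \<subseteq> lattice_gen a b c"
  proof
    fix x assume "x \<in> lattice_gen (-(a+b+c)) b c"
    then obtain i j k :: int where x: "x = of_int i *\<^sub>R (-(a+b+c)) + of_int j *\<^sub>R b + of_int k *\<^sub>R c"
      by (auto simp: lattice_gen_def)
    have "x = of_int (-i) *\<^sub>R a + of_int (j - i) *\<^sub>R b + of_int (k - i) *\<^sub>R c"
      by (simp add: x algebra_simps)
    then show "x \<in> lattice_gen a b c" unfolding lattice_gen_def by blast
  qed
  show "lattice_gen a b c \<subseteq> lattice_gen (-(a+b+c)) b c"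
  proof
    fix x assume "x \<in> lattice_gen a b c"
    then obtain i j k :: int where x: "x = of_int i *\<^sub>R a + of_int j *\<^sub>R b + of_int k *\<^sub>R c"
      by (auto simp: lattice_gen_def)
    have "x = of_int (-i) *\<^sub>R (-(a+b+c)) + of_int (j - i) *\<^sub>R b + of_int (k - i) *\<^sub>R c"
      by (simp add: x algebra_simps)
    then show "x \<in> lattice_gen (-(a+b+c)) b c" unfolding lattice_gen_def by blast
  qed
qed

lemma independent3_iff:
  fixes x y z :: vec3
  assumes "x \<noteq> y" "x \<noteq> z" "y \<noteq> z"
  shows "independent {x, y, z} \<longleftrightarrow> (\<forall>a b c. a *\<^sub>R x + b *\<^sub>R y + c *\<^sub>R z = 0 \<longrightarrow> a = 0 \<and> b = 0 \<and> c = 0)"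
proof
  assume ind: "independent {x, y, z}"
  show "\<forall>a b c. a *\<^sub>R x + b *\<^sub>R y + c *\<^sub>R z = 0 \<longrightarrow> a = 0 \<and> b = 0 \<and> c = 0"
  proof (intro allI impI)
    fix a b c assume h: "a *\<^sub>R x + b *\<^sub>R y + c *\<^sub>R z = 0"
    define u where "u w = (if w = x then a else if w = y then b else c)" for w
    have "(\<Sum>w\<in>{x, y, z}. u w *\<^sub>R w) = 0" using assms h by (simp add: u_def add.assoc)
    then have "\<forall>w\<in>{x,y,z}. u w = 0" using ind dependent_finite[of "{x,y,z}"] by blast
    then show "a = 0 \<and> b = 0 \<and> c = 0" using assms by (auto simp: u_def)
  qed
next
  assume h: "\<forall>a b c. a *\<^sub>R x + b *\<^sub>R y + c *\<^sub>R z = 0 \<longrightarrow> a = 0 \<and> b = 0 \<and> c = 0"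
  show "independent {x, y, z}"
  proof (rule ccontr)
    assume "\<not> independent {x, y, z}"
    then obtain u where u: "\<exists>w\<in>{x,y,z}. u w \<noteq> 0" "(\<Sum>w\<in>{x, y, z}. u w *\<^sub>R w) = 0"
      using dependent_finite[of "{x,y,z}"] by auto
    have "u x *\<^sub>R x + u y *\<^sub>R y + u z *\<^sub>R z = 0" using u(2) assms by (simp add: add.assoc)
    then show False using h u(1) by auto
  qed
qed

context superbase begin

lemma basis_combination_eq_0: "a *\<^sub>R v 1 + b *\<^sub>R v 2 + c *\<^sub>R v 3 = 0 \<Longrightarrow> a = 0 \<and> b = 0 \<and> c = 0"
  using independent_basis independent3_iff[OF basis_distinct] by blast

lemma v0_neq: "v 0 \<noteq> v 1" "v 0 \<noteq> v 2" "v 0 \<noteq> v 3"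
proof -
  have e1: "2 *\<^sub>R v 1 + 1 *\<^sub>R v 2 + 1 *\<^sub>R v 3 = v 1 - v 0" by (simp add: v0_eq scaleR_2 algebra_simps)
  have e2: "1 *\<^sub>R v 1 + 2 *\<^sub>R v 2 + 1 *\<^sub>R v 3 = v 2 - v 0" by (simp add: v0_eq scaleR_2 algebra_simps)
  have e3: "1 *\<^sub>R v 1 + 1 *\<^sub>R v 2 + 2 *\<^sub>R v 3 = v 3 - v 0" by (simp add: v0_eq scaleR_2 algebra_simps)
  show "v 0 \<noteq> v 1" using basis_combination_eq_0[of 2 1 1] e1 by auto
  show "v 0 \<noteq> v 2" using basis_combination_eq_0[of 1 2 1] e2 by auto
  show "v 0 \<noteq> v 3" using basis_combination_eq_0[of 1 1 2] e3 by auto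
qed

lemma v_inj: "i \<in> {0..3} \<Longrightarrow> j \<in> {0..3} \<Longrightarrow> v i = v j \<Longrightarrow> i = j"
proof -
  assume ij: "i \<in> {0..3}" "j \<in> {0..3}" "v i = v j"
  have "i = 0 \<or> i = 1 \<or> i = 2 \<or> i = 3" "j = 0 \<or> j = 1 \<or> j = 2 \<or> j = 3" using ij by auto
  then show "i = j" using ij(3) v0_neq basis_distinct by (auto simp: eq_commute[of "v 0"])
qed

lemma is_lattice_basis_023: "is_lattice_basis L (v 0) (v 2) (v 3)"
proof -
  have "lattice_gen (v 0) (v 2) (v 3) = L" unfolding v0_eq L_eq by (rule lattice_gen_replace)
  moreover have "independent {v 0, v 2, v 3}"
  proof -
    have "a = 0 \<and> b = 0 \<and> c = 0" if h: "a *\<^sub>R v 0 + b *\<^sub>R v 2 + c *\<^sub>R v 3 = 0" for a b c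
    proof -
      have "(-a) *\<^sub>R v 1 + (b - a) *\<^sub>R v 2 + (c - a) *\<^sub>R v 3 = a *\<^sub>R v 0 + b *\<^sub>R v 2 + c *\<^sub>R v 3"
        by (simp add: v0_eq algebra_simps)
      then show ?thesis using basis_combination_eq_0[of "-a" "b - a" "c - a"] h by simp
    qed
    then show ?thesis using independent3_iff[of "v 0" "v 2" "v 3"] v0_neq basis_distinct by blast
  qed
  ultimately show ?thesis using v0_neq basis_distinct by (simp add: is_lattice_basis_def)
qed

end

lemma is_lattice_basis_swap12: "is_lattice_basis L a b c = is_lattice_basis L b a c"
  unfolding is_lattice_basis_def by (auto simp: lattice_gen_swap12 insert_commute)

lemma is_lattice_basis_swap23: "is_lattice_basis L a b c = is_lattice_basis L a c b"
  unfolding is_lattice_basis_def by (auto simp: lattice_gen_swap23 insert_commute)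

lemma lattice_gen_cong_set:
  assumes "{a, b, c} = {a', b', c'}" "a \<noteq> b" "a \<noteq> c" "b \<noteq> c" "a' \<noteq> b'" "a' \<noteq> c'" "b' \<noteq> c'"
  shows "lattice_gen a b c = lattice_gen a' b' c'"
proof -
  have gen: "lattice_gen x y z = {w. \<exists>f::vec3\<Rightarrow>int. w = (\<Sum>u\<in>{x,y,z}. of_int (f u) *\<^sub>R u)}"
    if "x \<noteq> y" "x \<noteq> z" "y \<noteq> z" for x y z
  proof
    show "lattice_gen x y z \<subseteq> {w. \<exists>f::vec3\<Rightarrow>int. w = (\<Sum>u\<in>{x,y,z}. of_int (f u) *\<^sub>R u)}"
    proof
      fix w assume "w \<in> lattice_gen x y z"
      then obtain i j k :: int where w: "w = of_int i *\<^sub>R x + of_int j *\<^sub>R y + of_int k *\<^sub>R z"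
        by (auto simp: lattice_gen_def)
      define f where "f u = (if u = x then i else if u = y then j else k)" for u
      have "w = (\<Sum>u\<in>{x,y,z}. of_int (f u) *\<^sub>R u)" using that by (simp add: w f_def add.assoc)
      then show "w \<in> {w. \<exists>f::vec3\<Rightarrow>int. w = (\<Sum>u\<in>{x,y,z}. of_int (f u) *\<^sub>R u)}" by blast
    qed
    show "{w. \<exists>f::vec3\<Rightarrow>int. w = (\<Sum>u\<in>{x,y,z}. of_int (f u) *\<^sub>R u)} \<subseteq> lattice_gen x y z"
    proof
      fix w assume "w \<in> {w. \<exists>f::vec3\<Rightarrow>int. w = (\<Sum>u\<in>{x,y,z}. of_int (f u) *\<^sub>R u)}"
      then obtain f :: "vec3 \<Rightarrow> int" where "w = (\<Sum>u\<in>{x,y,z}. of_int (f u) *\<^sub>R u)" by blast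
      then have "w = of_int (f x) *\<^sub>R x + of_int (f y) *\<^sub>R y + of_int (f z) *\<^sub>R z" using that by (simp add: add.assoc)
      then show "w \<in> lattice_gen x y z" unfolding lattice_gen_def by blast
    qed
  qed
  show ?thesis using gen[of a b c] gen[of a' b' c'] assms by simp
qed

lemma is_lattice_basis_cong_set:
  assumes "is_lattice_basis L a b c" "{a, b, c} = {a', b', c'}" "a' \<noteq> b'" "a' \<noteq> c'" "b' \<noteq> c'"
  shows "is_lattice_basis L a' b' c'"
  using assms lattice_gen_cong_set[of a b c a' b' c'] unfolding is_lattice_basis_def by auto

lemma is_superbase_swap12: "is_superbase L v \<Longrightarrow> is_superbase L (v(1 := v 2, 2 := v 1))"
  unfolding is_superbase_def using is_lattice_basis_swap12 by (auto simp: add_ac)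

lemma is_superbase_swap13: "is_superbase L v \<Longrightarrow> is_superbase L (v(1 := v 3, 3 := v 1))"
  unfolding is_superbase_def using is_lattice_basis_swap12 is_lattice_basis_swap23 by (auto simp: add_ac)

context superbase begin

lemma exists_basis_omitting:
  assumes "m \<in> {0..3::nat}"
  shows "\<exists>a b c. is_lattice_basis L a b c \<and> {a, b, c} = v ` ({0..3} - {m})"
proof -
  have "m = 0 \<or> m = 1 \<or> m = 2 \<or> m = 3" using assms by auto
  moreover have m4: "{0..3::nat} - {0} = {1,2,3}" "{0..3::nat} - {1} = {0,2,3}" "{0..3::nat} - {2} = {0,1,3}" "{0..3::nat} - {3} = {0,1,2}"
    by auto
  moreover have "is_lattice_basis L (v 1) (v 2) (v 3)" using superbase by (simp add: is_superbase_def)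
  moreover have "is_lattice_basis L (v 0) (v 2) (v 3)" by (rule is_lattice_basis_023)
  moreover have "is_lattice_basis L (v 0) (v 1) (v 3)"
    using superbase.is_lattice_basis_023[OF superbase.intro[OF is_superbase_swap12[OF superbase]]] by simp
  moreover have "is_lattice_basis L (v 0) (v 2) (v 1)"
    using superbase.is_lattice_basis_023[OF superbase.intro[OF is_superbase_swap13[OF superbase]]] by simp
  ultimately show ?thesis
  proof (elim disjE)
    assume "m = 0" then have "{0..3::nat} - {m} = {1,2,3}" by auto
    then show ?thesis using \<open>is_lattice_basis L (v 1) (v 2) (v 3)\<close> by (rule_tac x="v 1" in exI, rule_tac x="v 2" in exI, rule_tac x="v 3" in exI) auto
  next
    assume "m = 1" then have "{0..3::nat} - {m} = {0,2,3}" by auto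
    then show ?thesis using \<open>is_lattice_basis L (v 0) (v 2) (v 3)\<close> by (rule_tac x="v 0" in exI, rule_tac x="v 2" in exI, rule_tac x="v 3" in exI) auto
  next
    assume "m = 2" then have "{0..3::nat} - {m} = {0,1,3}" by auto
    then show ?thesis using \<open>is_lattice_basis L (v 0) (v 1) (v 3)\<close> by (rule_tac x="v 0" in exI, rule_tac x="v 1" in exI, rule_tac x="v 3" in exI) auto
  next
    assume "m = 3" then have "{0..3::nat} - {m} = {0,1,2}" by auto
    then show ?thesis using \<open>is_lattice_basis L (v 0) (v 2) (v 1)\<close> by (rule_tac x="v 0" in exI, rule_tac x="v 2" in exI, rule_tac x="v 1" in exI) auto
  qed
qed

lemma is_superbase_permute:
  assumes sp: "\<sigma> permutes {0..3}"
  shows "is_superbase L (v \<circ> \<sigma>)"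
proof -
  have img: "\<sigma> ` {1,2,3} = {0..3} - {\<sigma> 0}"
  proof -
    have "\<sigma> ` {0..3} = {0..3}" by (rule permutes_image[OF sp])
    moreover have "{0..3::nat} = insert 0 {1,2,3}" by auto
    ultimately have "insert (\<sigma> 0) (\<sigma> ` {1,2,3}) = {0..3}" by simp
    moreover have "\<sigma> 0 \<notin> \<sigma> ` {1,2,3}" using permutes_inj[OF sp] by (auto simp: inj_eq)
    ultimately show ?thesis by auto
  qed
  have s0: "\<sigma> 0 \<in> {0..3}" using permutes_in_image[OF sp] by simp
  obtain a b c where abc: "is_lattice_basis L a b c" "{a, b, c} = v ` ({0..3} - {\<sigma> 0})"
    using exists_basis_omitting[OF s0] by blast
  have inI: "\<sigma> k \<in> {0..3}" if "k \<in> {0..3}" for k using permutes_in_image[OF sp] that by simp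
  have dst: "v (\<sigma> i) \<noteq> v (\<sigma> j)" if "i \<in> {0..3}" "j \<in> {0..3}" "i \<noteq> j" for i j
    using v_inj[OF inI[OF that(1)] inI[OF that(2)]] permutes_inj[OF sp] that by (auto simp: inj_eq)
  have "{a, b, c} = v ` (\<sigma> ` {1,2,3})" using abc(2) unfolding img .
  then have seteq: "{a, b, c} = {v (\<sigma> 1), v (\<sigma> 2), v (\<sigma> 3)}" by auto
  have "is_lattice_basis L (v (\<sigma> 1)) (v (\<sigma> 2)) (v (\<sigma> 3))"
    by (rule is_lattice_basis_cong_set[OF abc(1) seteq]) (use dst[of 1 2] dst[of 1 3] dst[of 2 3] in auto)
  moreover have "v (\<sigma> 0) + (v (\<sigma> 1) + v (\<sigma> 2) + v (\<sigma> 3)) = 0"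
    using sum_v_eq_0 sum_permutes_0_3[OF sp, of v] by (simp add: add.assoc)
  then have "v (\<sigma> 0) = - (v (\<sigma> 1) + v (\<sigma> 2) + v (\<sigma> 3))" by (rule iffD2[OF eq_neg_iff_add_eq_0])
  ultimately show ?thesis by (simp add: is_superbase_def)
qed

end

lemma is_obtuse_permute:
  assumes "is_obtuse v" "\<sigma> permutes {0..3}"
  shows "is_obtuse (v \<circ> \<sigma>)"
  unfolding is_obtuse_def
proof (intro allI impI)
  fix i j :: nat assume "i < 4" "j < 4" "i \<noteq> j"
  moreover have "\<sigma> i \<in> {0..3}" "\<sigma> j \<in> {0..3}" using permutes_in_image[OF assms(2)] \<open>i<4\<close> \<open>j<4\<close> by auto
  moreover have "\<sigma> i \<noteq> \<sigma> j" using permutes_inj[OF assms(2)] \<open>i \<noteq> j\<close> by (auto simp: inj_eq)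
  ultimately show "0 \<le> conorm (v \<circ> \<sigma>) i j" using assms(1) by (auto simp: is_obtuse_def conorm_def)
qed

lemma finite_lattice_points_bounded:
  assumes lb: "is_lattice_basis L b1 b2 b3"
  shows "finite {y\<in>L. y \<bullet> y \<le> B}"
proof -
  have d: "b1 \<noteq> b2" "b1 \<noteq> b3" "b2 \<noteq> b3" and ind: "independent {b1, b2, b3}" and L: "L = lattice_gen b1 b2 b3"
    using lb by (auto simp: is_lattice_basis_def)
  define f :: "real^3 \<Rightarrow> vec3" where "f x = x$1 *\<^sub>R b1 + x$2 *\<^sub>R b2 + x$3 *\<^sub>R b3" for x
  have lin: "linear f" unfolding f_def by (intro linearI) (auto simp: algebra_simps)
  have inj: "inj f"
  proof (rule injI)
    fix x y assume "f x = f y"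
    then have "(x$1 - y$1) *\<^sub>R b1 + (x$2 - y$2) *\<^sub>R b2 + (x$3 - y$3) *\<^sub>R b3 = 0" by (simp add: f_def algebra_simps)
    then have "x$1 - y$1 = 0 \<and> x$2 - y$2 = 0 \<and> x$3 - y$3 = 0" using ind independent3_iff[OF d] by blast
    then show "x = y" by (simp add: vec_eq_iff forall_3)
  qed
  obtain g where g: "linear g" "g \<circ> f = id" using linear_injective_left_inverse[OF lin inj] by blast
  obtain C where C: "C > 0" "\<And>y. norm (g y) \<le> C * norm y" using linear_bounded_pos[OF g(1)] by blast
  define K where "K = ceiling (C * (1 + B))"
  define h where "h t = (case t of (i, j, k) \<Rightarrow> of_int i *\<^sub>R b1 + of_int j *\<^sub>R b2 + of_int k *\<^sub>R (b3::vec3))" for t :: "int \<times> int \<times> int"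
  have "{y\<in>L. y \<bullet> y \<le> B} \<subseteq> h ` ({-K..K} \<times> {-K..K} \<times> {-K..K})"
  proof
    fix y assume y: "y \<in> {y\<in>L. y \<bullet> y \<le> B}"
    then obtain i j k :: int where yy: "y = of_int i *\<^sub>R b1 + of_int j *\<^sub>R b2 + of_int k *\<^sub>R b3"
      unfolding L lattice_gen_def by blast
    define x :: "real^3" where "x = vector [of_int i, of_int j, of_int k]"
    have fx: "f x = y" by (simp add: f_def x_def vector_3 yy)
    have gy: "g y = x" using g(2) fx by (metis comp_apply id_apply)
    have "norm y \<le> 1 + B"
    proof -
      have "0 \<le> (norm y - 1)^2" by simp
      then have "2 * norm y \<le> (norm y)^2 + 1" by (simp add: power2_diff)
      then have "norm y \<le> 1 + (norm y)^2" using norm_ge_zero[of y] by linarith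
      then show ?thesis using y by (simp add: power2_norm_eq_inner)
    qed
    then have nx: "norm x \<le> C * (1 + B)" using C gy by (metis mult_left_mono order.trans less_imp_le)
    have "\<bar>x$n\<bar> \<le> C * (1 + B)" for n using component_le_norm_cart[of x n] nx by linarith
    then have "\<bar>real_of_int i\<bar> \<le> C * (1 + B)" "\<bar>real_of_int j\<bar> \<le> C * (1 + B)" "\<bar>real_of_int k\<bar> \<le> C * (1 + B)"
      by (auto simp: x_def vector_3 dest: spec[of _ 1] spec[of _ 2] spec[of _ 3])
      (metis vector_3(1), metis vector_3(2), metis vector_3(3))
    then have "i \<in> {-K..K}" "j \<in> {-K..K}" "k \<in> {-K..K}" unfolding K_def by (auto simp: abs_le_iff; linarith)+
    then have "(i, j, k) \<in> {-K..K} \<times> {-K..K} \<times> {-K..K}" by simp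
    moreover have "y = h (i, j, k)" by (simp add: h_def yy)
    ultimately show "y \<in> h ` ({-K..K} \<times> {-K..K} \<times> {-K..K})" by blast
  qed
  then show ?thesis by (rule finite_subset) simp
qed

lemma is_lattice_basis_reduce:
  assumes lb: "is_lattice_basis L a b c"
  shows "is_lattice_basis L (-a) b (c + a)"
proof -
  have d: "a \<noteq> b" "a \<noteq> c" "b \<noteq> c" and ind: "independent {a, b, c}" and L: "L = lattice_gen a b c"
    using lb by (auto simp: is_lattice_basis_def)
  note li = ind[unfolded independent3_iff[OF d], rule_format]
  have d2: "-a \<noteq> b" "-a \<noteq> c + a" "b \<noteq> c + a"
  proof -
    show "-a \<noteq> b" proof assume h: "-a = b" then have "1 *\<^sub>R a + 1 *\<^sub>R b + 0 *\<^sub>R c = 0" by (simp add: h[symmetric]) then show False using li[of 1 1 0] by simp qed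
    show "-a \<noteq> c + a" proof assume h: "-a = c + a"
      have "c = c + a - a" by simp
      then have "c = -a - a" by (simp only: h[symmetric])
      then have "2 *\<^sub>R a + 0 *\<^sub>R b + 1 *\<^sub>R c = 0" by (simp add: scaleR_2)
      then show False using li[of 2 0 1] by simp qed
    show "b \<noteq> c + a" proof assume h: "b = c + a" then have "1 *\<^sub>R a + (-1) *\<^sub>R b + 1 *\<^sub>R c = 0" by (simp add: h) then show False using li[of 1 "-1" 1] by simp qed
  qed
  have "independent {-a, b, c + a}"
    unfolding independent3_iff[OF d2]
  proof (intro allI impI)
    fix x y z assume "x *\<^sub>R (-a) + y *\<^sub>R b + z *\<^sub>R (c + a) = 0"
    then have "(z - x) *\<^sub>R a + y *\<^sub>R b + z *\<^sub>R c = 0" by (simp add: algebra_simps)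
    then have "z - x = 0 \<and> y = 0 \<and> z = 0" by (rule li)
    then show "x = 0 \<and> y = 0 \<and> z = 0" by simp
  qed
  moreover have "lattice_gen (-a) b (c + a) = L"
  proof
    show "lattice_gen (-a) b (c + a) \<subseteq> L"
    proof
      fix x assume "x \<in> lattice_gen (-a) b (c + a)"
      then obtain i j k :: int where x: "x = of_int i *\<^sub>R (-a) + of_int j *\<^sub>R b + of_int k *\<^sub>R (c + a)"
        by (auto simp: lattice_gen_def)
      have "x = of_int (k - i) *\<^sub>R a + of_int j *\<^sub>R b + of_int k *\<^sub>R c" by (simp add: x algebra_simps)
      then show "x \<in> L" unfolding L lattice_gen_def by blast
    qed
    show "L \<subseteq> lattice_gen (-a) b (c + a)"
    proof
      fix x assume "x \<in> L"
      then obtain i j k :: int where x: "x = of_int i *\<^sub>R a + of_int j *\<^sub>R b + of_int k *\<^sub>R c"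
        unfolding L by (auto simp: lattice_gen_def)
      have "x = of_int (k - i) *\<^sub>R (-a) + of_int j *\<^sub>R b + of_int k *\<^sub>R (c + a)" by (simp add: x algebra_simps)
      then show "x \<in> lattice_gen (-a) b (c + a)" unfolding lattice_gen_def by blast
    qed
  qed
  ultimately show ?thesis using d2 by (simp add: is_lattice_basis_def)
qed

lemma exists_permutes_1_2:
  assumes "i \<in> {0..3::nat}" "j \<in> {0..3}" "i \<noteq> j"
  shows "\<exists>\<sigma>. \<sigma> permutes {0..3} \<and> \<sigma> 1 = i \<and> \<sigma> 2 = j"
proof -
  define j' where "j' = Transposition.transpose 1 i j"
  have j'I: "j' \<in> {0..3}" using assms by (auto simp: j'_def Transposition.transpose_def)
  have j'1: "j' \<noteq> 1" using assms by (auto simp: j'_def Transposition.transpose_def)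
  define \<sigma> where "\<sigma> = Transposition.transpose 1 i \<circ> Transposition.transpose 2 j'"
  have "\<sigma> permutes {0..3}" unfolding \<sigma>_def
    by (rule permutes_compose; rule permutes_swap_id) (use assms j'I in auto)
  moreover have "\<sigma> 1 = i" using j'1 by (simp add: \<sigma>_def Transposition.transpose_def)
  moreover have "\<sigma> 2 = j" using assms by (auto simp: \<sigma>_def j'_def Transposition.transpose_def)
  ultimately show ?thesis by blast
qed

definition superbase_of :: "vec3 \<Rightarrow> vec3 \<Rightarrow> vec3 \<Rightarrow> nat \<Rightarrow> vec3" where
  "superbase_of a b c k = (if k = 0 then -(a+b+c) else if k = 1 then a else if k = 2 then b else c)"

definition norm_sum :: "vec3 \<times> vec3 \<times> vec3 \<Rightarrow> real" where
  "norm_sum t = (case t of (a, b, c) \<Rightarrow> a \<bullet> a + b \<bullet> b + c \<bullet> c + (a+b+c) \<bullet> (a+b+c))"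

lemma is_superbase_superbase_of: "is_lattice_basis L a b c \<Longrightarrow> is_superbase L (superbase_of a b c)"
  by (simp add: is_superbase_def superbase_of_def)

lemma norm_sum_eq: "is_superbase L w \<Longrightarrow> norm_sum (w 1, w 2, w 3) = (\<Sum>k\<in>{0..3}. w k \<bullet> w k)"
  by (simp add: norm_sum_def sum_atLeast0_atMost_3 is_superbase_def del: minus_add_distrib)

lemma basis_in_lattice:
  assumes "is_lattice_basis L a b c"
  shows "a \<in> L" "b \<in> L" "c \<in> L"
proof -
  have L: "L = lattice_gen a b c" using assms by (simp add: is_lattice_basis_def)
  show "a \<in> L" unfolding L lattice_gen_def by (rule CollectI, rule exI[of _ 1], rule exI[of _ 0], rule exI[of _ 0]) simp
  show "b \<in> L" unfolding L lattice_gen_def by (rule CollectI, rule exI[of _ 0], rule exI[of _ 1], rule exI[of _ 0]) simp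
  show "c \<in> L" unfolding L lattice_gen_def by (rule CollectI, rule exI[of _ 0], rule exI[of _ 0], rule exI[of _ 1]) simp
qed

lemma finite_bases_norm_sum_le:
  assumes lb: "is_lattice_basis L b1 b2 b3"
  shows "finite {t. (case t of (a, b, c) \<Rightarrow> is_lattice_basis L a b c) \<and> norm_sum t \<le> N}" (is "finite ?T")
proof -
  define F where "F = {y\<in>L. y \<bullet> y \<le> N}"
  have finF: "finite F" unfolding F_def by (rule finite_lattice_points_bounded[OF lb])
  have "?T \<subseteq> F \<times> F \<times> F"
  proof
    fix t assume "t \<in> ?T"
    then obtain a b c where t: "t = (a, b, c)" "is_lattice_basis L a b c" "norm_sum (a, b, c) \<le> N"
      by auto
    have "0 \<le> a \<bullet> a" "0 \<le> b \<bullet> b" "0 \<le> c \<bullet> c" "0 \<le> (a+b+c) \<bullet> (a+b+c)" by simp_all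
    moreover have "a \<bullet> a + b \<bullet> b + c \<bullet> c + (a+b+c) \<bullet> (a+b+c) \<le> N" using t(3) by (simp add: norm_sum_def)
    ultimately have "a \<bullet> a \<le> N" "b \<bullet> b \<le> N" "c \<bullet> c \<le> N" by linarith+
    then show "t \<in> F \<times> F \<times> F" using t basis_in_lattice[OF t(2)] by (simp add: F_def)
  qed
  then show ?thesis using finF by (meson finite_SigmaI finite_subset)
qed

text \<open>Selling's reduction: a superbase minimizing the sum of squared norms is obtuse, since
  for v i \<bullet> v j > 0 the superbase obtained from the basis (- v i, v j, v k + v i) has a sum
  smaller by 2 v i \<bullet> v j.\<close>
lemma exists_obtuse_superbase:
  assumes "is_lattice L"
  shows "\<exists>v. obtuse_superbase L v"
proof -
  obtain b1 b2 b3 where lb: "is_lattice_basis L b1 b2 b3" using assms by (auto simp: is_lattice_def)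
  define N0 where "N0 = norm_sum (b1, b2, b3)"
  define T where "T = {t. (case t of (a, b, c) \<Rightarrow> is_lattice_basis L a b c) \<and> norm_sum t \<le> N0}"
  have finT: "finite T" unfolding T_def by (rule finite_bases_norm_sum_le[OF lb])
  have "(b1, b2, b3) \<in> T" using lb by (simp add: T_def N0_def)
  then have neT: "T \<noteq> {}" by blast
  define m where "m = Min (norm_sum ` T)"
  have "m \<in> norm_sum ` T" unfolding m_def using finT neT by (intro Min_in) auto
  then obtain t where tT: "t \<in> T" and tm: "norm_sum t = m" by auto
  have mle: "m \<le> norm_sum t'" if "t' \<in> T" for t' unfolding m_def using finT that by simp
  obtain a b c where t: "t = (a, b, c)" and lbt: "is_lattice_basis L a b c" and NN: "norm_sum (a,b,c) \<le> N0"
    using tT unfolding T_def by auto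
  define v where "v = superbase_of a b c"
  have v_superbase: "is_superbase L v" unfolding v_def by (rule is_superbase_superbase_of[OF lbt])
  interpret superbase L v by unfold_locales (rule v_superbase)
  have Nv: "(\<Sum>k\<in>{0..3}. v k \<bullet> v k) = m" using norm_sum_eq[OF v_superbase] tm t by (simp add: v_def superbase_of_def)
  have "is_obtuse v"
    unfolding is_obtuse_def
  proof (intro allI impI, rule ccontr)
    fix i j :: nat assume ij: "i < 4" "j < 4" "i \<noteq> j" and neg: "\<not> 0 \<le> conorm v i j"
    obtain \<sigma> where sp: "\<sigma> permutes {0..3}" and s12: "\<sigma> 1 = i" "\<sigma> 2 = j"
      using exists_permutes_1_2[of i j] ij by auto
    define w where "w = v \<circ> \<sigma>"
    have sbw: "is_superbase L w" unfolding w_def by (rule is_superbase_permute[OF sp])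
    have pos: "w 1 \<bullet> w 2 > 0" using neg s12 by (simp add: w_def conorm_def)
    have lbw: "is_lattice_basis L (w 1) (w 2) (w 3)" and w0: "w 0 = - (w 1 + w 2 + w 3)"
      using sbw by (auto simp: is_superbase_def)
    have lbu: "is_lattice_basis L (- w 1) (w 2) (w 3 + w 1)" by (rule is_lattice_basis_reduce[OF lbw])
    have Nw: "norm_sum (w 1, w 2, w 3) = m"
      using norm_sum_eq[OF sbw] Nv sum_permutes_0_3[OF sp, of "\<lambda>k. v k \<bullet> v k"] by (simp add: w_def sum_atLeast0_atMost_3)
    have "norm_sum (- w 1, w 2, w 3 + w 1) = norm_sum (w 1, w 2, w 3) - 2 * (w 1 \<bullet> w 2)"
      by (simp add: norm_sum_def inner_add_left inner_add_right inner_commute algebra_simps)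
    then have lt: "norm_sum (- w 1, w 2, w 3 + w 1) < m" using Nw pos by simp
    then have "(- w 1, w 2, w 3 + w 1) \<in> T" using lbu NN tm t by (simp add: T_def)
    then show False using mle lt by fastforce
  qed
  then show ?thesis using v_superbase by (auto simp: obtuse_superbase_def)
qed

context superbase begin

lemma conorm_sbB2:
  assumes z: "conorm v 2 3 = 0"
  shows "conorm (sbB2 v) 2 3 = 0" "conorm (sbB2 v) 1 3 = conorm v 0 3" "conorm (sbB2 v) 1 2 = conorm v 1 2"
    "conorm (sbB2 v) 0 1 = conorm v 0 1" "conorm (sbB2 v) 0 2 = conorm v 0 2" "conorm (sbB2 v) 0 3 = conorm v 1 3"
  using z by (simp_all add: conorm_def sbB2_def v0_eq inner_add_left inner_add_right inner_commute algebra_simps)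

lemma is_superbase_sbB2: "is_superbase L (sbB2 v)"
proof -
  have lb: "is_lattice_basis L (v 1) (v 2) (v 3)" using superbase by (simp add: is_superbase_def)
  have "is_lattice_basis L (v 3) (v 2) (v 1)" using lb is_lattice_basis_swap12 is_lattice_basis_swap23 by metis
  then have "is_lattice_basis L (- v 3) (v 2) (v 1 + v 3)" by (rule is_lattice_basis_reduce)
  then have "is_lattice_basis L (v 1 + v 3) (v 2) (- v 3)" using is_lattice_basis_swap12 is_lattice_basis_swap23 by metis
  then show ?thesis by (simp add: is_superbase_def sbB2_def v0_eq algebra_simps)
qed

end

context obtuse_base begin

lemma obtuse_superbase_sbB2:
  assumes z: "conorm v 2 3 = 0"
  shows "obtuse_superbase L (sbB2 v)"
proof -
  note c = conorm_sbB2[OF z]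
  have nn: "conorm v i j \<ge> 0" if "i < 4" "j < 4" "i \<noteq> j" for i j using conorm_nonneg that by auto
  have "conorm (sbB2 v) i j \<ge> 0" if "i < 4" "j < 4" "i \<noteq> j" for i j
  proof -
    have "i = 0 \<or> i = 1 \<or> i = 2 \<or> i = 3" "j = 0 \<or> j = 1 \<or> j = 2 \<or> j = 3" using that by auto
    then show ?thesis using that c nn[of 0 3] nn[of 1 2] nn[of 0 1] nn[of 0 2] nn[of 1 3]
      using conorm_commute[of "sbB2 v" 1 0] conorm_commute[of "sbB2 v" 2 0] conorm_commute[of "sbB2 v" 3 0]
        conorm_commute[of "sbB2 v" 2 1] conorm_commute[of "sbB2 v" 3 1] conorm_commute[of "sbB2 v" 3 2]
      by auto
  qed
  then show ?thesis using is_superbase_sbB2 by (simp add: obtuse_superbase_def is_obtuse_def)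
qed

end

section \<open>Classification of the obtuse superbases\<close>

type_synonym int_triple = "int \<times> int \<times> int"

definition short_coords :: "int_triple list" where
  "short_coords =
    [(-1,-1,-1), (-1,-1,0), (-1,0,-1), (-1,0,0), (0,-1,-1), (0,-1,0), (0,-1,1), (0,0,-1),
     (0,0,1), (0,1,-1), (0,1,0), (0,1,1), (1,0,0), (1,0,1), (1,1,0), (1,1,1)]"

definition add_triple :: "int_triple \<Rightarrow> int_triple \<Rightarrow> int_triple" where
  "add_triple s t = (case s of (a, b, c) \<Rightarrow> case t of (d, e, f) \<Rightarrow> (a + d, b + e, c + f))"

text \<open>Coordinates of the vectors of B1 (b = 0) and B2 (b = 1) with respect to v 1, v 2, v 3.\<close>
definition sb12_coords :: "nat \<Rightarrow> nat \<Rightarrow> int_triple" where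
  "sb12_coords b k =
    (if b = 0 then (if k = 0 then (-1,-1,-1) else if k = 1 then (1,0,0) else if k = 2 then (0,1,0) else (0,0,1))
     else (if k = 0 then (-1,-1,0) else if k = 1 then (1,0,1) else if k = 2 then (0,1,0) else (0,0,-1)))"

definition scale_triple :: "int \<Rightarrow> int_triple \<Rightarrow> int_triple" where
  "scale_triple e t = (case t of (a, b, c) \<Rightarrow> (e * a, e * b, e * c))"

definition sb12_coord_triple :: "int \<Rightarrow> nat \<Rightarrow> nat list \<Rightarrow> int_triple \<times> int_triple \<times> int_triple" where
  "sb12_coord_triple e b pl =
    (scale_triple e (sb12_coords b (pl ! 1)), scale_triple e (sb12_coords b (pl ! 2)),
     scale_triple e (sb12_coords b (pl ! 3)))"

definition perms4 :: "nat list list" where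
  "perms4 =
    [[0,1,2,3], [0,1,3,2], [0,2,1,3], [0,2,3,1], [0,3,1,2], [0,3,2,1],
     [1,0,2,3], [1,0,3,2], [1,2,0,3], [1,2,3,0], [1,3,0,2], [1,3,2,0],
     [2,0,1,3], [2,0,3,1], [2,1,0,3], [2,1,3,0], [2,3,0,1], [2,3,1,0],
     [3,0,1,2], [3,0,2,1], [3,1,0,2], [3,1,2,0], [3,2,0,1], [3,2,1,0]]"

definition sb12_coord_triples :: "(int_triple \<times> int_triple \<times> int_triple) list" where
  "sb12_coord_triples = [sb12_coord_triple e b pl. e \<leftarrow> [1, -1], b \<leftarrow> [0, 1], pl \<leftarrow> perms4]"

text \<open>The pairs of short coordinate triples whose sum is again short; only an
  intermediate table that keeps the enumeration of triples small.\<close>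
definition short_pairs :: "(int_triple \<times> int_triple) list" where
  "short_pairs =
    [((-1,-1,-1),(0,0,1)), ((-1,-1,-1),(0,1,0)), ((-1,-1,-1),(0,1,1)), ((-1,-1,-1),(1,0,0)),
     ((-1,-1,-1),(1,0,1)), ((-1,-1,-1),(1,1,0)), ((-1,-1,0),(0,0,-1)), ((-1,-1,0),(0,1,-1)),
     ((-1,-1,0),(0,1,0)), ((-1,-1,0),(1,0,0)), ((-1,-1,0),(1,0,1)), ((-1,-1,0),(1,1,1)),
     ((-1,0,-1),(0,-1,0)), ((-1,0,-1),(0,-1,1)), ((-1,0,-1),(0,0,1)), ((-1,0,-1),(1,0,0)),
     ((-1,0,-1),(1,1,0)), ((-1,0,-1),(1,1,1)), ((-1,0,0),(0,-1,-1)), ((-1,0,0),(0,-1,0)),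
     ((-1,0,0),(0,0,-1)), ((-1,0,0),(1,0,1)), ((-1,0,0),(1,1,0)), ((-1,0,0),(1,1,1)),
     ((0,-1,-1),(-1,0,0)), ((0,-1,-1),(0,0,1)), ((0,-1,-1),(0,1,0)), ((0,-1,-1),(1,1,1)),
     ((0,-1,0),(-1,0,-1)), ((0,-1,0),(-1,0,0)), ((0,-1,0),(0,0,-1)), ((0,-1,0),(0,0,1)),
     ((0,-1,0),(0,1,-1)), ((0,-1,0),(0,1,1)), ((0,-1,0),(1,1,0)), ((0,-1,0),(1,1,1)),
     ((0,-1,1),(-1,0,-1)), ((0,-1,1),(0,0,-1)), ((0,-1,1),(0,1,0)), ((0,-1,1),(1,1,0)),
     ((0,0,-1),(-1,-1,0)), ((0,0,-1),(-1,0,0)), ((0,0,-1),(0,-1,0)), ((0,0,-1),(0,-1,1)),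
     ((0,0,-1),(0,1,0)), ((0,0,-1),(0,1,1)), ((0,0,-1),(1,0,1)), ((0,0,-1),(1,1,1)),
     ((0,0,1),(-1,-1,-1)), ((0,0,1),(-1,0,-1)), ((0,0,1),(0,-1,-1)), ((0,0,1),(0,-1,0)),
     ((0,0,1),(0,1,-1)), ((0,0,1),(0,1,0)), ((0,0,1),(1,0,0)), ((0,0,1),(1,1,0)),
     ((0,1,-1),(-1,-1,0)), ((0,1,-1),(0,-1,0)), ((0,1,-1),(0,0,1)), ((0,1,-1),(1,0,1)),
     ((0,1,0),(-1,-1,-1)), ((0,1,0),(-1,-1,0)), ((0,1,0),(0,-1,-1)), ((0,1,0),(0,-1,1)),
     ((0,1,0),(0,0,-1)), ((0,1,0),(0,0,1)), ((0,1,0),(1,0,0)), ((0,1,0),(1,0,1)),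
     ((0,1,1),(-1,-1,-1)), ((0,1,1),(0,-1,0)), ((0,1,1),(0,0,-1)), ((0,1,1),(1,0,0)),
     ((1,0,0),(-1,-1,-1)), ((1,0,0),(-1,-1,0)), ((1,0,0),(-1,0,-1)), ((1,0,0),(0,0,1)),
     ((1,0,0),(0,1,0)), ((1,0,0),(0,1,1)), ((1,0,1),(-1,-1,-1)), ((1,0,1),(-1,-1,0)),
     ((1,0,1),(-1,0,0)), ((1,0,1),(0,0,-1)), ((1,0,1),(0,1,-1)), ((1,0,1),(0,1,0)),
     ((1,1,0),(-1,-1,-1)), ((1,1,0),(-1,0,-1)), ((1,1,0),(-1,0,0)), ((1,1,0),(0,-1,0)),
     ((1,1,0),(0,-1,1)), ((1,1,0),(0,0,1)), ((1,1,1),(-1,-1,0)), ((1,1,1),(-1,0,-1)),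
     ((1,1,1),(-1,0,0)), ((1,1,1),(0,-1,-1)), ((1,1,1),(0,-1,0)), ((1,1,1),(0,0,-1))]"

lemma short_pairs_complete: "\<forall>c1\<in>set short_coords. \<forall>c2\<in>set short_coords. add_triple c1 c2 \<in> set short_coords \<longrightarrow> (c1, c2) \<in> set short_pairs"
  by code_simp

lemma sb12_coord_triples_complete: "\<forall>(c1, c2)\<in>set short_pairs. \<forall>c3\<in>set short_coords. add_triple c1 c3 \<in> set short_coords \<longrightarrow> add_triple c2 c3 \<in> set short_coords \<longrightarrow>
   add_triple (add_triple c1 c2) c3 \<in> set short_coords \<longrightarrow> (c1, c2, c3) \<in> set sb12_coord_triples"
  by code_simp

lemma short_triple_in_sb12_coord_triples:
  assumes "c1 \<in> set short_coords" "c2 \<in> set short_coords" "c3 \<in> set short_coords" "add_triple c1 c2 \<in> set short_coords" "add_triple c1 c3 \<in> set short_coords"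
    "add_triple c2 c3 \<in> set short_coords" "add_triple (add_triple c1 c2) c3 \<in> set short_coords"
  shows "(c1, c2, c3) \<in> set sb12_coord_triples"
proof -
  have "(c1, c2) \<in> set short_pairs" using short_pairs_complete assms(1,2,4) by blast
  then show ?thesis using sb12_coord_triples_complete assms(3,5,6,7) by fast
qed

lemma weighted_square_le_add_even:
  fixes c :: real and d m :: int
  assumes "c \<ge> 0" "d \<in> {-1, 0, 1}"
  shows "c * (of_int d)\<^sup>2 \<le> c * (of_int (d + 2 * m))\<^sup>2"
proof -
  have "\<bar>d\<bar> \<le> \<bar>d + 2 * m\<bar>" using assms(2) by (cases "m = 0") auto
  then have "d\<^sup>2 \<le> (d + 2 * m)\<^sup>2" by (simp add: abs_le_square_iff)
  then have "(of_int d :: real)\<^sup>2 \<le> (of_int (d + 2 * m))\<^sup>2" by (metis of_int_le_iff of_int_power)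
  then show ?thesis using assms(1) by (rule mult_left_mono)
qed

lemma abs_le_1_if_square_eq:
  fixes x y :: int
  assumes "(of_int x :: real)\<^sup>2 = (of_int y)\<^sup>2" "y \<in> {-1, 0, 1}"
  shows "\<bar>x\<bar> \<le> 1"
proof -
  have "x\<^sup>2 = y\<^sup>2" using assms(1) by (metis of_int_eq_iff of_int_power)
  then have "\<bar>x\<bar> = \<bar>y\<bar>" by (metis abs_power2 power2_eq_iff abs_minus_cancel)
  then show ?thesis using assms(2) by auto
qed

context superbase begin

lemma norm_basis_combination: "(norm (a *\<^sub>R v 1 + b *\<^sub>R v 2 + c *\<^sub>R v 3))^2 =
   conorm v 0 1 * a^2 + conorm v 0 2 * b^2 + conorm v 0 3 * c^2
   + conorm v 1 2 * (a - b)^2 + conorm v 1 3 * (a - c)^2 + conorm v 2 3 * (b - c)^2"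
  unfolding power2_norm_eq_inner
  by (simp add: conorm_def v0_eq inner_add_left inner_add_right inner_diff_left inner_diff_right inner_commute algebra_simps power2_eq_square)

definition coord_vec :: "int_triple \<Rightarrow> vec3" where
  "coord_vec t = (case t of (a, b, c) \<Rightarrow> of_int a *\<^sub>R v 1 + of_int b *\<^sub>R v 2 + of_int c *\<^sub>R v 3)"

lemma norm_coord_vec:
  "(norm (coord_vec (x1, x2, x3)))\<^sup>2 =
     conorm v 0 1 * (of_int x1)\<^sup>2 + conorm v 0 2 * (of_int x2)\<^sup>2 + conorm v 0 3 * (of_int x3)\<^sup>2
     + conorm v 1 2 * (of_int (x1 - x2))\<^sup>2 + conorm v 1 3 * (of_int (x1 - x3))\<^sup>2 + conorm v 2 3 * (of_int (x2 - x3))\<^sup>2"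
  by (simp only: coord_vec_def prod.case norm_basis_combination of_int_diff)

lemma norm_coord_vec_add_even:
  "(norm (coord_vec (r1 + 2 * q1, r2 + 2 * q2, r3 + 2 * q3)))\<^sup>2 =
     conorm v 0 1 * (of_int (r1 + 2 * q1))\<^sup>2 + conorm v 0 2 * (of_int (r2 + 2 * q2))\<^sup>2
     + conorm v 0 3 * (of_int (r3 + 2 * q3))\<^sup>2 + conorm v 1 2 * (of_int ((r1 - r2) + 2 * (q1 - q2)))\<^sup>2
     + conorm v 1 3 * (of_int ((r1 - r3) + 2 * (q1 - q3)))\<^sup>2 + conorm v 2 3 * (of_int ((r2 - r3) + 2 * (q2 - q3)))\<^sup>2"
  by (simp only: norm_coord_vec) (simp add: algebra_simps)

lemma coord_vec_add_triple: "coord_vec (add_triple s t) = coord_vec s + coord_vec t"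
  by (cases s; cases t) (simp add: coord_vec_def add_triple_def algebra_simps)

lemma exists_coord_vec: "y \<in> L \<Longrightarrow> \<exists>t. y = coord_vec t"
  unfolding L_eq lattice_gen_def coord_vec_def by auto

lemma coord_vec_in_L: "coord_vec t \<in> L"
  unfolding L_eq lattice_gen_def coord_vec_def by (cases t) auto

end

context obtuse_base begin

lemma norm_coord_vec_le_add_even:
  assumes r: "r1 \<in> {0, 1}" "r2 \<in> {0, 1}" "r3 \<in> {0, 1}"
  shows "(norm (coord_vec (r1, r2, r3)))\<^sup>2 \<le> (norm (coord_vec (r1 + 2 * q1, r2 + 2 * q2, r3 + 2 * q3)))\<^sup>2"
proof -
  have p: "conorm v 0 1 \<ge> 0" "conorm v 0 2 \<ge> 0" "conorm v 0 3 \<ge> 0" "conorm v 1 2 \<ge> 0" "conorm v 1 3 \<ge> 0" "conorm v 2 3 \<ge> 0"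
    by (auto intro: conorm_nonneg)
  have d: "r1 \<in> {-1,0,1}" "r2 \<in> {-1,0,1}" "r3 \<in> {-1,0,1}" "r1 - r2 \<in> {-1,0,1}" "r1 - r3 \<in> {-1,0,1}" "r2 - r3 \<in> {-1,0,1}"
    using r by auto
  show ?thesis
    using norm_coord_vec_add_even[of r1 q1 r2 q2 r3 q3] norm_coord_vec[of r1 r2 r3]
      weighted_square_le_add_even[OF p(1) d(1), of q1] weighted_square_le_add_even[OF p(2) d(2), of q2]
      weighted_square_le_add_even[OF p(3) d(3), of q3] weighted_square_le_add_even[OF p(4) d(4), of "q1 - q2"]
      weighted_square_le_add_even[OF p(5) d(5), of "q1 - q3"] weighted_square_le_add_even[OF p(6) d(6), of "q2 - q3"]
    by linarith
qed

lemma coord_vec_01_coset_minimal: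
  assumes e: "e1 \<in> {0, 1}" "e2 \<in> {0, 1}" "e3 \<in> {0, 1}" and z: "z \<in> L"
  shows "(norm (coord_vec (e1, e2, e3)))\<^sup>2 \<le> (norm (coord_vec (e1, e2, e3) + 2 *\<^sub>R z))\<^sup>2"
proof -
  obtain m1 m2 m3 :: int where z: "z = coord_vec (m1, m2, m3)" using exists_coord_vec[OF z] by auto
  have "coord_vec (e1, e2, e3) + 2 *\<^sub>R z = coord_vec (e1 + 2 * m1, e2 + 2 * m2, e3 + 2 * m3)"
    by (simp add: z coord_vec_def algebra_simps)
  then show ?thesis using norm_coord_vec_le_add_even[OF e] by simp
qed

text \<open>Write the vector as r + 2q with r in {0, 1}^3: minimality forces every positively
  weighted term of Selling's formula to keep its value.\<close>
lemma coset_minimal_coords_bounded: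
  assumes pos: "conorm v 0 1 > 0" "conorm v 0 2 > 0" "conorm v 0 3 > 0" "conorm v 1 2 > 0" "conorm v 1 3 > 0"
    and min: "\<And>z. z \<in> L \<Longrightarrow> (norm (coord_vec (n1, n2, n3)))\<^sup>2 \<le> (norm (coord_vec (n1, n2, n3) + 2 *\<^sub>R z))\<^sup>2"
  shows "\<bar>n1\<bar> \<le> 1 \<and> \<bar>n2\<bar> \<le> 1 \<and> \<bar>n3\<bar> \<le> 1 \<and> \<bar>n1 - n2\<bar> \<le> 1 \<and> \<bar>n1 - n3\<bar> \<le> 1"
proof -
  define r1 r2 r3 where "r1 = n1 mod 2" and "r2 = n2 mod 2" and "r3 = n3 mod 2"
  define q1 q2 q3 where "q1 = n1 div 2" and "q2 = n2 div 2" and "q3 = n3 div 2"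
  have n: "n1 = r1 + 2 * q1" "n2 = r2 + 2 * q2" "n3 = r3 + 2 * q3"
    by (simp_all add: r1_def r2_def r3_def q1_def q2_def q3_def)
  have r: "r1 \<in> {0,1}" "r2 \<in> {0,1}" "r3 \<in> {0,1}" by (auto simp: r1_def r2_def r3_def)
  have "coord_vec (n1, n2, n3) + 2 *\<^sub>R coord_vec (-q1, -q2, -q3) = coord_vec (r1, r2, r3)"
    by (simp add: coord_vec_def n algebra_simps)
  then have le: "(norm (coord_vec (n1, n2, n3)))\<^sup>2 \<le> (norm (coord_vec (r1, r2, r3)))\<^sup>2"
    using min[OF coord_vec_in_L[of "(-q1, -q2, -q3)"]] by simp
  have p: "conorm v 0 1 \<ge> 0" "conorm v 0 2 \<ge> 0" "conorm v 0 3 \<ge> 0" "conorm v 1 2 \<ge> 0" "conorm v 1 3 \<ge> 0" "conorm v 2 3 \<ge> 0"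
    by (auto intro: conorm_nonneg)
  have d: "r1 \<in> {-1,0,1}" "r2 \<in> {-1,0,1}" "r3 \<in> {-1,0,1}" "r1 - r2 \<in> {-1,0,1}" "r1 - r3 \<in> {-1,0,1}" "r2 - r3 \<in> {-1,0,1}"
    using r by auto
  have eq: "(norm (coord_vec (n1, n2, n3)))\<^sup>2 =
     conorm v 0 1 * (of_int (r1 + 2 * q1))\<^sup>2 + conorm v 0 2 * (of_int (r2 + 2 * q2))\<^sup>2
     + conorm v 0 3 * (of_int (r3 + 2 * q3))\<^sup>2 + conorm v 1 2 * (of_int ((r1 - r2) + 2 * (q1 - q2)))\<^sup>2
     + conorm v 1 3 * (of_int ((r1 - r3) + 2 * (q1 - q3)))\<^sup>2 + conorm v 2 3 * (of_int ((r2 - r3) + 2 * (q2 - q3)))\<^sup>2"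
    unfolding n by (rule norm_coord_vec_add_even)
  note terms = le eq norm_coord_vec[of r1 r2 r3]
    weighted_square_le_add_even[OF p(1) d(1), of q1] weighted_square_le_add_even[OF p(2) d(2), of q2]
    weighted_square_le_add_even[OF p(3) d(3), of q3] weighted_square_le_add_even[OF p(4) d(4), of "q1 - q2"]
    weighted_square_le_add_even[OF p(5) d(5), of "q1 - q3"] weighted_square_le_add_even[OF p(6) d(6), of "q2 - q3"]
  have "conorm v 0 1 * (of_int (r1 + 2 * q1))\<^sup>2 = conorm v 0 1 * (of_int r1)\<^sup>2"
    using terms by linarith
  then have "\<bar>r1 + 2 * q1\<bar> \<le> 1" using abs_le_1_if_square_eq[OF _ d(1)] pos(1) by simp
  moreover have "conorm v 0 2 * (of_int (r2 + 2 * q2))\<^sup>2 = conorm v 0 2 * (of_int r2)\<^sup>2"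
    using terms by linarith
  then have "\<bar>r2 + 2 * q2\<bar> \<le> 1" using abs_le_1_if_square_eq[OF _ d(2)] pos(2) by simp
  moreover have "conorm v 0 3 * (of_int (r3 + 2 * q3))\<^sup>2 = conorm v 0 3 * (of_int r3)\<^sup>2"
    using terms by linarith
  then have "\<bar>r3 + 2 * q3\<bar> \<le> 1" using abs_le_1_if_square_eq[OF _ d(3)] pos(3) by simp
  moreover have "conorm v 1 2 * (of_int ((r1 - r2) + 2 * (q1 - q2)))\<^sup>2 = conorm v 1 2 * (of_int (r1 - r2))\<^sup>2"
    using terms by linarith
  then have "\<bar>(r1 - r2) + 2 * (q1 - q2)\<bar> \<le> 1" using abs_le_1_if_square_eq[OF _ d(4)] pos(4) by simp
  moreover have "conorm v 1 3 * (of_int ((r1 - r3) + 2 * (q1 - q3)))\<^sup>2 = conorm v 1 3 * (of_int (r1 - r3))\<^sup>2"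
    using terms by linarith
  then have "\<bar>(r1 - r3) + 2 * (q1 - q3)\<bar> \<le> 1" using abs_le_1_if_square_eq[OF _ d(5)] pos(5) by simp
  ultimately show ?thesis using n by (simp add: algebra_simps)
qed

end

lemma mem_short_coords:
  fixes n1 n2 n3 :: int
  assumes "\<bar>n1\<bar> \<le> 1 \<and> \<bar>n2\<bar> \<le> 1 \<and> \<bar>n3\<bar> \<le> 1 \<and> \<bar>n1 - n2\<bar> \<le> 1 \<and> \<bar>n1 - n3\<bar> \<le> 1"
    and "(n1, n2, n3) \<noteq> (0, 0, 0)"
  shows "(n1, n2, n3) \<in> set short_coords"
proof -
  have "n1 \<in> {-1,0,1}" "n2 \<in> {-1,0,1}" "n3 \<in> {-1,0,1}" using assms(1) by auto
  moreover have "\<forall>a\<in>{-1,0,1::int}. \<forall>b\<in>{-1,0,1::int}. \<forall>c\<in>{-1,0,1::int}.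
     \<bar>a\<bar> \<le> 1 \<and> \<bar>b\<bar> \<le> 1 \<and> \<bar>c\<bar> \<le> 1 \<and> \<bar>a - b\<bar> \<le> 1 \<and> \<bar>a - c\<bar> \<le> 1 \<longrightarrow> (a, b, c) \<noteq> (0, 0, 0) \<longrightarrow> (a, b, c) \<in> set short_coords"
    by code_simp
  ultimately show ?thesis using assms by blast
qed

lemma perms4_props: "\<forall>pl\<in>set perms4. length pl = 4 \<and> distinct pl \<and> set pl = {0,1,2,3}"
  by code_simp

lemma list_length_4_eq: "length xs = 4 \<Longrightarrow> xs = [xs!0, xs!1, xs!2, xs!3]"
  by (simp add: list_eq_iff_nth_eq less_Suc_eq numeral_eq_Suc)

lemma perms4_nth: "pl \<in> set perms4 \<Longrightarrow> k < 4 \<Longrightarrow> pl ! k < 4"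
  using perms4_props nth_mem[of k pl] by fastforce

lemma perms4_sum:
  fixes B :: "nat \<Rightarrow> vec3"
  assumes "pl \<in> set perms4"
  shows "B (pl!0) + B (pl!1) + B (pl!2) + B (pl!3) = (\<Sum>j\<in>{0..3}. B j)"
proof -
  have p: "length pl = 4" "distinct pl" "set pl = {0,1,2,3}" using perms4_props assms by auto
  have "(\<Sum>j\<in>{0..3}. B j) = (\<Sum>j\<in>set pl. B j)" using p(3) by (simp add: atLeastAtMost_insertL insert_commute eval_nat_numeral)
  also have "\<dots> = sum_list (map B pl)" using p(2) by (simp add: sum_list_distinct_conv_sum_set)
  also have "\<dots> = B (pl!0) + B (pl!1) + B (pl!2) + B (pl!3)" by (subst list_length_4_eq[OF p(1)]) (simp add: add.assoc)
  finally show ?thesis by simp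
qed

lemma perms4_set:
  assumes "pl \<in> set perms4"
  shows "{pl!0, pl!1, pl!2, pl!3} = {0,1,2,3}"
proof -
  have p: "length pl = 4" "set pl = {0,1,2,3}" using perms4_props assms by auto
  have "set pl = {pl!0, pl!1, pl!2, pl!3}" by (subst list_length_4_eq[OF p(1)]) simp
  then show ?thesis using p(2) by simp
qed

locale v2_base = obtuse_base +
  assumes z23: "conorm v 2 3 = 0"
    and pos: "conorm v 0 1 > 0" "conorm v 0 2 > 0" "conorm v 0 3 > 0" "conorm v 1 2 > 0" "conorm v 1 3 > 0"
begin

definition sb12 :: "nat \<Rightarrow> nat \<Rightarrow> vec3" where "sb12 b = (if b = 0 then v else sbB2 v)"

lemma coord_vec_sb12_coords: "b \<in> {0, 1} \<Longrightarrow> j < 4 \<Longrightarrow> coord_vec (sb12_coords b j) = sb12 b j"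
proof -
  assume b: "b \<in> {0, 1}" and j: "j < 4"
  then have "j = 0 \<or> j = 1 \<or> j = 2 \<or> j = 3" by auto
  then show ?thesis using b by (auto simp: coord_vec_def sb12_coords_def sb12_def sbB2_def v0_eq algebra_simps)
qed

lemma sum_sb12: "b \<in> {0, 1} \<Longrightarrow> (\<Sum>j\<in>{0..3}. sb12 b j) = 0"
  by (auto simp: sb12_def sbB2_def sum_atLeast0_atMost_3 v0_eq)

lemma coord_vec_scale_triple: "coord_vec (scale_triple e t) = of_int e *\<^sub>R coord_vec t"
  by (cases t) (simp add: coord_vec_def scale_triple_def algebra_simps)

lemma short_coords_of_partial_sum:
  assumes u: "obtuse_superbase L u"
    and e: "e1 \<in> {0,1}" "e2 \<in> {0,1}" "e3 \<in> {0,1}" "(e1, e2, e3) \<noteq> (0, 0, 0)"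
    and t: "of_int e1 *\<^sub>R u 1 + of_int e2 *\<^sub>R u 2 + of_int e3 *\<^sub>R u 3 = coord_vec t"
  shows "t \<in> set short_coords"
proof -
  interpret U: obtuse_base L u using u by unfold_locales (auto simp: obtuse_superbase_def)
  obtain n1 n2 n3 where n: "t = (n1, n2, n3)" by (cases t)
  have ut: "U.coord_vec (e1, e2, e3) = coord_vec t" using t by (simp add: U.coord_vec_def)
  have min: "(norm (coord_vec (n1, n2, n3)))\<^sup>2 \<le> (norm (coord_vec (n1, n2, n3) + 2 *\<^sub>R z))\<^sup>2" if "z \<in> L" for z
    using U.coord_vec_01_coset_minimal[OF e(1-3) that] ut n by simp
  have "U.coord_vec (e1, e2, e3) \<noteq> 0"
  proof
    assume "U.coord_vec (e1, e2, e3) = 0"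
    then have "real_of_int e1 = 0 \<and> real_of_int e2 = 0 \<and> real_of_int e3 = 0"
      by (intro U.basis_combination_eq_0) (simp add: U.coord_vec_def)
    then show False using e(4) by simp
  qed
  then have "(n1, n2, n3) \<noteq> (0, 0, 0)" using ut n by (auto simp: coord_vec_def)
  then show ?thesis using mem_short_coords[OF coset_minimal_coords_bounded[OF pos min]] n by simp
qed

lemma obtuse_superbase_classification:
  assumes u: "obtuse_superbase L u"
  shows "\<exists>e b pl. e \<in> {1, -1} \<and> b \<in> {0, 1} \<and> pl \<in> set perms4 \<and> (\<forall>k<4. u k = of_int e *\<^sub>R sb12 b (pl ! k))"
proof -
  interpret U: obtuse_base L u using u by unfold_locales (auto simp: obtuse_superbase_def)
  note short = short_coords_of_partial_sum[OF u]
  have uL: "u 1 \<in> L" "u 2 \<in> L" "u 3 \<in> L"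
    using U.coord_vec_in_L[of "(1,0,0)"] U.coord_vec_in_L[of "(0,1,0)"] U.coord_vec_in_L[of "(0,0,1)"] by (simp_all add: U.coord_vec_def)
  obtain c1 c2 c3 where c: "u 1 = coord_vec c1" "u 2 = coord_vec c2" "u 3 = coord_vec c3" using exists_coord_vec uL by metis
  have c1': "u (Suc 0) = coord_vec c1" using c(1) by simp
  have "c1 \<in> set short_coords" by (rule short[of 1 0 0]) (auto simp: c c1')
  moreover have "c2 \<in> set short_coords" by (rule short[of 0 1 0]) (auto simp: c c1')
  moreover have "c3 \<in> set short_coords" by (rule short[of 0 0 1]) (auto simp: c c1')
  moreover have "add_triple c1 c2 \<in> set short_coords" by (rule short[of 1 1 0]) (auto simp: c c1' coord_vec_add_triple)
  moreover have "add_triple c1 c3 \<in> set short_coords" by (rule short[of 1 0 1]) (auto simp: c c1' coord_vec_add_triple)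
  moreover have "add_triple c2 c3 \<in> set short_coords" by (rule short[of 0 1 1]) (auto simp: c c1' coord_vec_add_triple)
  moreover have "add_triple (add_triple c1 c2) c3 \<in> set short_coords" by (rule short[of 1 1 1]) (auto simp: c c1' coord_vec_add_triple)
  ultimately have "(c1, c2, c3) \<in> set sb12_coord_triples" by (rule short_triple_in_sb12_coord_triples)
  then obtain e b pl where ebp: "e \<in> {1, -1}" "b \<in> {0, 1::nat}" "pl \<in> set perms4" and g: "(c1, c2, c3) = sb12_coord_triple e b pl"
    unfolding sb12_coord_triples_def by auto
  have uk: "u k = of_int e *\<^sub>R sb12 b (pl ! k)" if "k \<in> {1,2,3}" for k
  proof -
    have "u k = coord_vec (scale_triple e (sb12_coords b (pl ! k)))" using that g c by (auto simp: sb12_coord_triple_def)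
    also have "\<dots> = of_int e *\<^sub>R sb12 b (pl ! k)"
      using coord_vec_sb12_coords[OF ebp(2) perms4_nth[OF ebp(3)]] that by (auto simp: coord_vec_scale_triple)
    finally show ?thesis .
  qed
  have "u 0 = of_int e *\<^sub>R sb12 b (pl ! 0)"
  proof -
    have "sb12 b (pl!0) + sb12 b (pl!1) + sb12 b (pl!2) + sb12 b (pl!3) = 0"
      using perms4_sum[OF ebp(3), of "sb12 b"] sum_sb12[OF ebp(2)] by simp
    then have "sb12 b (pl!0) + (sb12 b (pl!1) + sb12 b (pl!2) + sb12 b (pl!3)) = 0" by (simp add: add.assoc)
    then have "sb12 b (pl!0) = - (sb12 b (pl!1) + sb12 b (pl!2) + sb12 b (pl!3))" by (rule iffD2[OF eq_neg_iff_add_eq_0])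
    have uk1: "u 1 = of_int e *\<^sub>R sb12 b (pl ! 1)" "u 2 = of_int e *\<^sub>R sb12 b (pl ! 2)" "u 3 = of_int e *\<^sub>R sb12 b (pl ! 3)"
      by (rule uk; simp)+
    have "u 0 = - (u 1 + u 2 + u 3)" by (rule U.v0_eq)
    also have "\<dots> = of_int e *\<^sub>R (- (sb12 b (pl!1) + sb12 b (pl!2) + sb12 b (pl!3)))"
      by (simp only: uk1 scaleR_add_right scaleR_minus_right)
    finally show ?thesis using \<open>sb12 b (pl!0) = - (sb12 b (pl!1) + sb12 b (pl!2) + sb12 b (pl!3))\<close> by simp
  qed
  then have "\<forall>k<4. u k = of_int e *\<^sub>R sb12 b (pl ! k)" using uk by (auto simp: less_Suc_eq numeral_eq_Suc)
  then show ?thesis using ebp by blast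
qed

end

section \<open>Coforms and the dihedral group\<close>

lemma all_less_4: "(\<forall>k<4::nat. P k) \<longleftrightarrow> P 0 \<and> P 1 \<and> P 2 \<and> P 3"
  by (auto simp: less_Suc_eq numeral_eq_Suc)

lemma sq_corner_simps: "sq_corner W 0 = conorm W 1 3" "sq_corner W 1 = conorm W 1 2"
  "sq_corner W 2 = conorm W 0 3" "sq_corner W 3 = conorm W 0 2"
  by (simp_all add: sq_corner_def)

lemma rotation_in_D4: "r < 4 \<Longrightarrow> (\<lambda>k. (r + k) mod 4) \<in> D4"
  unfolding D4_def by blast

lemma reflection_in_D4: "r < 4 \<Longrightarrow> (\<lambda>k. (r + 4 - k) mod 4) \<in> D4"
  unfolding D4_def by blast

lemma D4_related_if_corners:
  assumes "g \<in> D4" "g 0 = i" "g 1 = j" "g 2 = k" "g 3 = l"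
    "conorm W 1 3 = sq_corner V i" "conorm W 1 2 = sq_corner V j"
    "conorm W 0 3 = sq_corner V k" "conorm W 0 2 = sq_corner V l"
  shows "\<exists>g\<in>D4. \<forall>k<4. sq_corner W k = sq_corner V (g k)"
proof -
  have "\<forall>k<4. sq_corner W k = sq_corner V (g k)"
    unfolding all_less_4 sq_corner_simps using assms(2-9) by simp
  then show ?thesis using assms(1) by blast
qed

context v2_base begin

definition sb12_conorm :: "nat \<Rightarrow> nat \<Rightarrow> nat \<Rightarrow> real" where
  "sb12_conorm b i j = (if b = 0 then conorm v (min i j) (max i j)
     else if (min i j, max i j) = (0, 3) then conorm v 1 3
     else if (min i j, max i j) = (1, 3) then conorm v 0 3
     else if (min i j, max i j) = (2, 3) then 0 else conorm v (min i j) (max i j))"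

lemma conorm_minmax: "conorm X i j = conorm X (min i j) (max i j)"
  by (cases "i \<le> j") (auto simp: min_def max_def conorm_commute)

lemma conorm_sb12:
  assumes "b \<in> {0, 1}" "i < 4" "j < 4" "i \<noteq> j"
  shows "conorm (sb12 b) i j = sb12_conorm b i j"
proof -
  define a where "a = min i j"
  define c where "c = max i j"
  have ac: "a < c" "c < 4" using assms(2-4) by (auto simp: a_def c_def)
  then have "(a, c) \<in> {(0,1),(0,2),(0,3),(1,2),(1,3),(2,3)}" by (auto simp: less_Suc_eq numeral_eq_Suc)
  moreover have "conorm (sb12 b) i j = conorm (sb12 b) a c" unfolding a_def c_def by (rule conorm_minmax)
  moreover have "sb12_conorm b i j = (if b = 0 then conorm v a c else if (a, c) = (0, 3) then conorm v 1 3
     else if (a, c) = (1, 3) then conorm v 0 3 else if (a, c) = (2, 3) then 0 else conorm v a c)"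
    unfolding sb12_conorm_def by (simp only: a_def[symmetric] c_def[symmetric])
  moreover note conorm_sbB2[OF z23]
  ultimately show ?thesis using assms(1) by (auto simp: sb12_def)
qed

lemma conorm_scaled_permuted:
  assumes "\<forall>k<4. W k = of_int e *\<^sub>R sb12 b (pl ! k)" "e \<in> {1, -1}" "i < 4" "j < 4"
  shows "conorm W i j = conorm (sb12 b) (pl ! i) (pl ! j)"
proof -
  have "(of_int e :: real) * of_int e = 1" using assms(2) by auto
  then show ?thesis using assms by (simp add: conorm_def)
qed

lemma isometric_B1_or_B2:
  assumes u: "obtuse_superbase L u"
  shows "sb_isometric u v \<or> sb_isometric u (sbB2 v)"
proof -
  obtain e b pl where ebp: "e \<in> {1, -1}" "b \<in> {0, 1::nat}" "pl \<in> set perms4"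
    and uk: "\<forall>k<4. u k = of_int e *\<^sub>R sb12 b (pl ! k)"
    using obtuse_superbase_classification[OF u] by blast
  define f where "f x = (of_int e :: real) *\<^sub>R (x :: vec3)" for x
  have ee: "(of_int e :: real) * of_int e = 1" using ebp(1) by auto
  have ot: "orthogonal_transformation f"
    unfolding orthogonal_transformation_def f_def using ee by (auto intro: linearI simp: algebra_simps)
  have fu: "f (u k) = sb12 b (pl ! k)" if "k < 4" for k using uk that ee by (simp add: f_def)
  have "f ` sb_set u = {sb12 b (pl!0), sb12 b (pl!1), sb12 b (pl!2), sb12 b (pl!3)}"
    by (simp add: sb_set_def fu)
  also have "\<dots> = sb12 b ` {pl!0, pl!1, pl!2, pl!3}" by simp
  also have "\<dots> = sb_set (sb12 b)" using perms4_set[OF ebp(3)] by (simp add: sb_set_def)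
  finally have "sb_isometric u (sb12 b)" using ot unfolding sb_isometric_def by blast
  then show ?thesis using ebp(2) by (auto simp: sb12_def)
qed

lemma conorm_neq_0: "conorm v 0 1 \<noteq> 0" "conorm v 0 2 \<noteq> 0" "conorm v 0 3 \<noteq> 0" "conorm v 1 2 \<noteq> 0" "conorm v 1 3 \<noteq> 0"
  using pos by auto

lemma sb12_conorm_eq_0:
  assumes "b \<in> {0, 1::nat}" "i < 4" "j < 4" "i \<noteq> j" "sb12_conorm b i j = 0"
  shows "(min i j, max i j) = (2, 3)"
proof -
  have "(min i j, max i j) \<in> {(0,1),(0,2),(0,3),(1,2),(1,3),(2,3)}"
    using assms(2-4) by (auto simp: less_Suc_eq numeral_eq_Suc min_def max_def)
  then show ?thesis using assms(1,5) conorm_neq_0 by (auto simp: sb12_conorm_def)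
qed

lemma perms4_fixing_23: "\<forall>pl\<in>set perms4. (min (pl!2) (pl!3), max (pl!2) (pl!3)) = (2, 3) \<longrightarrow>
   pl = [0,1,2,3] \<or> pl = [1,0,2,3] \<or> pl = [0,1,3,2] \<or> pl = [1,0,3,2]"
  by code_simp

lemma conorm_eq_sb12_conorm:
  assumes b: "b \<in> {0, 1}" and pl: "pl \<in> set perms4"
    and rel: "\<And>i j. i < 4 \<Longrightarrow> j < 4 \<Longrightarrow> conorm W i j = conorm (sb12 b) (pl ! i) (pl ! j)"
    and ij: "i < 4" "j < 4" "i \<noteq> j"
  shows "conorm W i j = sb12_conorm b (pl ! i) (pl ! j)"
proof -
  have "pl ! i \<noteq> pl ! j" using perms4_props pl ij by (auto simp: nth_eq_iff_index_eq)
  then show ?thesis using rel[OF ij(1,2)] conorm_sb12[OF b perms4_nth[OF pl ij(1)] perms4_nth[OF pl ij(2)]] by simp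
qed

lemma perms4_zero_23:
  assumes b: "b \<in> {0, 1}" and pl: "pl \<in> set perms4"
    and rel: "\<And>i j. i < 4 \<Longrightarrow> j < 4 \<Longrightarrow> conorm W i j = conorm (sb12 b) (pl ! i) (pl ! j)"
    and z: "conorm W 2 3 = 0"
  shows "pl = [0,1,2,3] \<or> pl = [1,0,2,3] \<or> pl = [0,1,3,2] \<or> pl = [1,0,3,2]"
proof -
  have "pl ! 2 \<noteq> pl ! 3" using perms4_props pl by (auto simp: nth_eq_iff_index_eq)
  then have "(min (pl ! 2) (pl ! 3), max (pl ! 2) (pl ! 3)) = (2, 3)"
    using sb12_conorm_eq_0[OF b perms4_nth[OF pl, of 2] perms4_nth[OF pl, of 3]] z
      conorm_eq_sb12_conorm[OF b pl rel, of 2 3] by simp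
  then show ?thesis using perms4_fixing_23 pl by blast
qed

lemma D4_relation_B1:
  assumes pl: "pl = [0,1,2,3] \<or> pl = [1,0,2,3] \<or> pl = [0,1,3,2] \<or> pl = [1,0,3,2]"
    and T: "\<And>i j. i < 4 \<Longrightarrow> j < 4 \<Longrightarrow> i \<noteq> j \<Longrightarrow> conorm W i j = sb12_conorm 0 (pl ! i) (pl ! j)"
  shows "conorm W 0 1 = conorm v 0 1 \<and> (\<exists>g\<in>D4. \<forall>k<4. sq_corner W k = sq_corner v (g k))" (is ?G)
proof -
  have "?G" if "pl = [0,1,2,3]"
  proof -
    have w: "conorm W 0 1 = conorm v 0 1" "conorm W 1 3 = conorm v 1 3" "conorm W 1 2 = conorm v 1 2"
      "conorm W 0 3 = conorm v 0 3" "conorm W 0 2 = conorm v 0 2"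
      using T[of 0 1] T[of 1 3] T[of 1 2] T[of 0 3] T[of 0 2] that by (simp_all add: sb12_conorm_def numeral_2_eq_2 numeral_3_eq_3)
    show ?G
      by (intro conjI D4_related_if_corners[where g="\<lambda>k. (0 + k) mod 4" and i=0 and j=1 and k=2 and l=3] rotation_in_D4)
        (unfold w sq_corner_simps, simp_all)
  qed
  moreover
  have "?G" if "pl = [1,0,2,3]"
  proof -
    have w: "conorm W 0 1 = conorm v 0 1" "conorm W 1 3 = conorm v 0 3" "conorm W 1 2 = conorm v 0 2"
      "conorm W 0 3 = conorm v 1 3" "conorm W 0 2 = conorm v 1 2"
      using T[of 0 1] T[of 1 3] T[of 1 2] T[of 0 3] T[of 0 2] that by (simp_all add: sb12_conorm_def numeral_2_eq_2 numeral_3_eq_3)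
    show ?G
      by (intro conjI D4_related_if_corners[where g="\<lambda>k. (2 + k) mod 4" and i=2 and j=3 and k=0 and l=1] rotation_in_D4)
        (unfold w sq_corner_simps, simp_all)
  qed
  moreover
  have "?G" if "pl = [0,1,3,2]"
  proof -
    have w: "conorm W 0 1 = conorm v 0 1" "conorm W 1 3 = conorm v 1 2" "conorm W 1 2 = conorm v 1 3"
      "conorm W 0 3 = conorm v 0 2" "conorm W 0 2 = conorm v 0 3"
      using T[of 0 1] T[of 1 3] T[of 1 2] T[of 0 3] T[of 0 2] that by (simp_all add: sb12_conorm_def numeral_2_eq_2 numeral_3_eq_3)
    show ?G
      by (intro conjI D4_related_if_corners[where g="\<lambda>k. (1 + 4 - k) mod 4" and i=1 and j=0 and k=3 and l=2] reflection_in_D4)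
        (unfold w sq_corner_simps, simp_all)
  qed
  moreover
  have "?G" if "pl = [1,0,3,2]"
  proof -
    have w: "conorm W 0 1 = conorm v 0 1" "conorm W 1 3 = conorm v 0 2" "conorm W 1 2 = conorm v 0 3"
      "conorm W 0 3 = conorm v 1 2" "conorm W 0 2 = conorm v 1 3"
      using T[of 0 1] T[of 1 3] T[of 1 2] T[of 0 3] T[of 0 2] that by (simp_all add: sb12_conorm_def numeral_2_eq_2 numeral_3_eq_3)
    show ?G
      by (intro conjI D4_related_if_corners[where g="\<lambda>k. (3 + 4 - k) mod 4" and i=3 and j=2 and k=1 and l=0] reflection_in_D4)
        (unfold w sq_corner_simps, simp_all)
  qed
  ultimately show ?G using pl by blast
qed

lemma D4_relation_B2:
  assumes pl: "pl = [0,1,2,3] \<or> pl = [1,0,2,3] \<or> pl = [0,1,3,2] \<or> pl = [1,0,3,2]"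
    and T: "\<And>i j. i < 4 \<Longrightarrow> j < 4 \<Longrightarrow> i \<noteq> j \<Longrightarrow> conorm W i j = sb12_conorm 1 (pl ! i) (pl ! j)"
  shows "conorm W 0 1 = conorm v 0 1 \<and> (\<exists>g\<in>D4. \<forall>k<4. sq_corner W k = sq_corner v (g k))" (is ?G)
proof -
  have "?G" if "pl = [0,1,2,3]"
  proof -
    have w: "conorm W 0 1 = conorm v 0 1" "conorm W 1 3 = conorm v 0 3" "conorm W 1 2 = conorm v 1 2"
      "conorm W 0 3 = conorm v 1 3" "conorm W 0 2 = conorm v 0 2"
      using T[of 0 1] T[of 1 3] T[of 1 2] T[of 0 3] T[of 0 2] that by (simp_all add: sb12_conorm_def numeral_2_eq_2 numeral_3_eq_3)
    show ?G
      by (intro conjI D4_related_if_corners[where g="\<lambda>k. (2 + 4 - k) mod 4" and i=2 and j=1 and k=0 and l=3] reflection_in_D4)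
        (unfold w sq_corner_simps, simp_all)
  qed
  moreover
  have "?G" if "pl = [1,0,2,3]"
  proof -
    have w: "conorm W 0 1 = conorm v 0 1" "conorm W 1 3 = conorm v 1 3" "conorm W 1 2 = conorm v 0 2"
      "conorm W 0 3 = conorm v 0 3" "conorm W 0 2 = conorm v 1 2"
      using T[of 0 1] T[of 1 3] T[of 1 2] T[of 0 3] T[of 0 2] that by (simp_all add: sb12_conorm_def numeral_2_eq_2 numeral_3_eq_3)
    show ?G
      by (intro conjI D4_related_if_corners[where g="\<lambda>k. (0 + 4 - k) mod 4" and i=0 and j=3 and k=2 and l=1] reflection_in_D4)
        (unfold w sq_corner_simps, simp_all)
  qed
  moreover
  have "?G" if "pl = [0,1,3,2]"
  proof -
    have w: "conorm W 0 1 = conorm v 0 1" "conorm W 1 3 = conorm v 1 2" "conorm W 1 2 = conorm v 0 3"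
      "conorm W 0 3 = conorm v 0 2" "conorm W 0 2 = conorm v 1 3"
      using T[of 0 1] T[of 1 3] T[of 1 2] T[of 0 3] T[of 0 2] that by (simp_all add: sb12_conorm_def numeral_2_eq_2 numeral_3_eq_3)
    show ?G
      by (intro conjI D4_related_if_corners[where g="\<lambda>k. (1 + k) mod 4" and i=1 and j=2 and k=3 and l=0] rotation_in_D4)
        (unfold w sq_corner_simps, simp_all)
  qed
  moreover
  have "?G" if "pl = [1,0,3,2]"
  proof -
    have w: "conorm W 0 1 = conorm v 0 1" "conorm W 1 3 = conorm v 0 2" "conorm W 1 2 = conorm v 1 3"
      "conorm W 0 3 = conorm v 1 2" "conorm W 0 2 = conorm v 0 3"
      using T[of 0 1] T[of 1 3] T[of 1 2] T[of 0 3] T[of 0 2] that by (simp_all add: sb12_conorm_def numeral_2_eq_2 numeral_3_eq_3)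
    show ?G
      by (intro conjI D4_related_if_corners[where g="\<lambda>k. (3 + k) mod 4" and i=3 and j=0 and k=1 and l=2] rotation_in_D4)
        (unfold w sq_corner_simps, simp_all)
  qed
  ultimately show ?G using pl by blast
qed

lemma D4_relation:
  assumes b: "b \<in> {0, 1}" and pl: "pl \<in> set perms4"
    and rel: "\<And>i j. i < 4 \<Longrightarrow> j < 4 \<Longrightarrow> conorm W i j = conorm (sb12 b) (pl ! i) (pl ! j)"
    and z: "conorm W 2 3 = 0"
  shows "conorm W 0 1 = conorm v 0 1 \<and> (\<exists>g\<in>D4. \<forall>k<4. sq_corner W k = sq_corner v (g k))"
proof -
  note pl4 = perms4_zero_23[OF b pl rel z] and T = conorm_eq_sb12_conorm[OF b pl rel]
  show ?thesis
  proof (cases "b = 0")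
    case True
    show ?thesis by (rule D4_relation_B1[OF pl4 T[unfolded True]])
  next
    case False
    then have b1: "b = 1" using b by simp
    show ?thesis by (rule D4_relation_B2[OF pl4 T[unfolded b1]])
  qed
qed

end

lemma obtuse_base_of: "obtuse_superbase L v \<Longrightarrow> obtuse_base L v"
  by unfold_locales (auto simp: obtuse_superbase_def)

lemma exists_permutes_2_3:
  assumes "i < j" "j < (4::nat)"
  shows "\<exists>\<sigma>. \<sigma> permutes {0..3} \<and> \<sigma> 2 = i \<and> \<sigma> 3 = j"
proof -
  obtain \<sigma> where s: "\<sigma> permutes {0..3}" "\<sigma> 1 = i" "\<sigma> 2 = j" using exists_permutes_1_2[of i j] assms by auto
  define \<tau> where "\<tau> = Transposition.transpose (1::nat) 2 \<circ> Transposition.transpose 1 3"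
  have t: "\<tau> permutes {0..3}" unfolding \<tau>_def by (rule permutes_compose; rule permutes_swap_id) auto
  have "\<tau> 2 = 1" "\<tau> 3 = 2" by (simp_all add: \<tau>_def Transposition.transpose_def)
  then have "(\<sigma> \<circ> \<tau>) 2 = i" "(\<sigma> \<circ> \<tau>) 3 = j" using s by simp_all
  moreover have "(\<sigma> \<circ> \<tau>) permutes {0..3}" by (rule permutes_compose[OF t s(1)])
  ultimately show ?thesis by blast
qed

lemma zero_conorm_pair:
  assumes ob: "obtuse_superbase L v" and V2: "voronoi_type_V2 L"
  shows "\<exists>i j. i < j \<and> j < 4 \<and> {(i, j). i < j \<and> j < (4::nat) \<and> conorm v i j = 0} = {(i, j)}"
proof -
  interpret obtuse_base L v by (rule obtuse_base_of[OF ob])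
  have "card {(i, j). i < j \<and> j < (4::nat) \<and> conorm v i j = 0} = 1" by (rule card_zero_conorms_V2[OF V2])
  then obtain x where x: "{(i, j). i < j \<and> j < (4::nat) \<and> conorm v i j = 0} = {x}" by (auto simp: card_1_singleton_iff)
  obtain i j where "x = (i, j)" by (cases x)
  moreover have "x \<in> {(i, j). i < j \<and> j < (4::nat) \<and> conorm v i j = 0}" using x by simp
  ultimately show ?thesis using x by auto
qed

lemma exists_permutes_zero_23:
  assumes ob: "obtuse_superbase L v" and V2: "voronoi_type_V2 L"
  shows "\<exists>\<sigma>. \<sigma> permutes {0..3} \<and> conorm (v \<circ> \<sigma>) 2 3 = 0"
proof -
  obtain i j where ij: "i < j" "j < 4" and Z: "{(i, j). i < j \<and> j < (4::nat) \<and> conorm v i j = 0} = {(i, j)}"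
    using zero_conorm_pair[OF ob V2] by blast
  have "conorm v i j = 0" using Z by auto
  moreover obtain \<sigma> where "\<sigma> permutes {0..3}" "\<sigma> 2 = i" "\<sigma> 3 = j" using exists_permutes_2_3[OF ij] by blast
  ultimately show ?thesis by (auto simp: conorm_def)
qed

lemma obtuse_superbase_permute:
  assumes "obtuse_superbase L v" "\<sigma> permutes {0..3}"
  shows "obtuse_superbase L (v \<circ> \<sigma>)"
proof -
  interpret obtuse_base L v by (rule obtuse_base_of[OF assms(1)])
  show ?thesis using is_superbase_permute[OF assms(2)] is_obtuse_permute[OF obtuse assms(2)] by (simp add: obtuse_superbase_def)
qed

lemma v2_base_of:
  assumes ob: "obtuse_superbase L v" and V2: "voronoi_type_V2 L" and z: "conorm v 2 3 = 0"
  shows "v2_base L v"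
proof -
  interpret obtuse_base L v by (rule obtuse_base_of[OF ob])
  obtain i j where ij: "i < j" "j < 4" and Z: "{(i, j). i < j \<and> j < (4::nat) \<and> conorm v i j = 0} = {(i, j)}"
    using zero_conorm_pair[OF ob V2] by blast
  have "(2, 3) \<in> {(i, j). i < j \<and> j < (4::nat) \<and> conorm v i j = 0}" using z by simp
  then have Z23: "{(i, j). i < j \<and> j < (4::nat) \<and> conorm v i j = 0} = {(2, 3)}" using Z by auto
  have ne: "conorm v a b \<noteq> 0" if "a < b" "b < 4" "(a, b) \<noteq> (2, 3)" for a b
  proof
    assume "conorm v a b = 0"
    then have "(a, b) \<in> {(i, j). i < j \<and> j < (4::nat) \<and> conorm v i j = 0}" using that by simp
    then show False using Z23 that by simp
  qed
  have "conorm v a b > 0" if "a < b" "b < 4" "(a, b) \<noteq> (2, 3)" for a b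
    using ne[OF that] conorm_nonneg[of a b] that by force
  then show ?thesis using z by unfold_locales auto
qed

lemma exists_obtuse_superbase_orthogonal_23:
  assumes "is_lattice L" "voronoi_type_V2 L"
  shows "\<exists>v. obtuse_superbase L v \<and> v 2 \<bullet> v 3 = 0"
proof -
  obtain v where v: "obtuse_superbase L v" using exists_obtuse_superbase[OF assms(1)] by blast
  then obtain \<sigma> where \<sigma>: "\<sigma> permutes {0..3}" "conorm (v \<circ> \<sigma>) 2 3 = 0"
    using exists_permutes_zero_23[OF _ assms(2)] by blast
  then show ?thesis using obtuse_superbase_permute[OF v \<sigma>(1)] by (auto simp: conorm_def)
qed

lemma sbB2_obtuse_and_isometric:
  assumes V2: "voronoi_type_V2 L" and v: "obtuse_superbase L v" and orth: "v 2 \<bullet> v 3 = 0"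
  shows "obtuse_superbase L (sbB2 v) \<and>
    (\<forall>u. obtuse_superbase L u \<longrightarrow> sb_isometric u v \<or> sb_isometric u (sbB2 v))"
proof -
  have z: "conorm v 2 3 = 0" using orth by (simp add: conorm_def)
  interpret v2_base L v by (rule v2_base_of[OF v V2 z])
  show ?thesis using obtuse_superbase_sbB2[OF z] isometric_B1_or_B2 by blast
qed

lemma coform_sbB2:
  assumes "obtuse_superbase L v" "conorm v 2 3 = 0"
  shows "conorm (sbB2 v) 2 3 = 0 \<and> conorm (sbB2 v) 1 3 = conorm v 0 3 \<and>
    conorm (sbB2 v) 1 2 = conorm v 1 2 \<and> conorm (sbB2 v) 0 1 = conorm v 0 1 \<and>
    conorm (sbB2 v) 0 2 = conorm v 0 2 \<and> conorm (sbB2 v) 0 3 = conorm v 1 3"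
proof -
  interpret obtuse_base L v by (rule obtuse_base_of[OF assms(1)])
  show ?thesis using conorm_sbB2[OF assms(2)] by simp
qed

lemma card_zero_conorms:
  assumes "voronoi_type_V2 L" "obtuse_superbase L v"
  shows "card {(i, j). i < j \<and> j < (4::nat) \<and> conorm v i j = 0} = 1"
  using obtuse_base.card_zero_conorms_V2[OF obtuse_base_of[OF assms(2)] assms(1)] .

lemma coforms_D4_related:
  assumes V2: "voronoi_type_V2 L" and u: "obtuse_superbase L u" and w: "obtuse_superbase L w"
    and \<sigma>: "\<sigma> permutes {0..3}" and \<tau>: "\<tau> permutes {0..3}"
    and zu: "conorm (u \<circ> \<sigma>) 2 3 = 0" and zw: "conorm (w \<circ> \<tau>) 2 3 = 0"
  shows "conorm (w \<circ> \<tau>) 0 1 = conorm (u \<circ> \<sigma>) 0 1 \<and>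
    (\<exists>g\<in>D4. \<forall>k<4. sq_corner (w \<circ> \<tau>) k = sq_corner (u \<circ> \<sigma>) (g k))"
proof -
  interpret v2_base L "u \<circ> \<sigma>" by (rule v2_base_of[OF obtuse_superbase_permute[OF u \<sigma>] V2 zu])
  obtain e b pl where ebp: "e \<in> {1, -1}" "b \<in> {0, 1::nat}" "pl \<in> set perms4"
    and wk: "\<forall>k<4. (w \<circ> \<tau>) k = of_int e *\<^sub>R sb12 b (pl ! k)"
    using obtuse_superbase_classification[OF obtuse_superbase_permute[OF w \<tau>]] by blast
  show ?thesis
    by (rule D4_relation[OF ebp(2,3) conorm_scaled_permuted[OF wk ebp(1)] zw])
qed

theorem lemma4p2:
  fixes L :: "vec3 set"
  assumes "is_lattice L" and "voronoi_type_V2 L"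
  shows
    \<comment> \<open>(a)\<close>
    "(\<exists>v. obtuse_superbase L v \<and> v 2 \<bullet> v 3 = 0) \<and>
     (\<forall>v. obtuse_superbase L v \<and> v 2 \<bullet> v 3 = 0 \<longrightarrow>
        obtuse_superbase L (sbB2 v) \<and>
        (\<forall>u. obtuse_superbase L u \<longrightarrow> sb_isometric u v \<or> sb_isometric u (sbB2 v))) \<and>
     \<comment> \<open>(b)\<close>
     (\<forall>v. obtuse_superbase L v \<and> conorm v 2 3 = 0 \<longrightarrow>
        conorm (sbB2 v) 2 3 = 0 \<and> conorm (sbB2 v) 1 3 = conorm v 0 3 \<and>
        conorm (sbB2 v) 1 2 = conorm v 1 2 \<and> conorm (sbB2 v) 0 1 = conorm v 0 1 \<and>
        conorm (sbB2 v) 0 2 = conorm v 0 2 \<and> conorm (sbB2 v) 0 3 = conorm v 1 3) \<and>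
     \<comment> \<open>(c)\<close>
     (\<forall>v. obtuse_superbase L v \<longrightarrow>
        card {(i, j). i < j \<and> j < (4::nat) \<and> conorm v i j = 0} = 1 \<and>
        (\<exists>\<sigma>. \<sigma> permutes {0..3} \<and> conorm (v \<circ> \<sigma>) 2 3 = 0)) \<and>
     (\<forall>u w \<sigma> \<tau>. obtuse_superbase L u \<and> obtuse_superbase L w \<and>
        \<sigma> permutes {0..3} \<and> \<tau> permutes {0..3} \<and>
        conorm (u \<circ> \<sigma>) 2 3 = 0 \<and> conorm (w \<circ> \<tau>) 2 3 = 0 \<longrightarrow>
        conorm (w \<circ> \<tau>) 0 1 = conorm (u \<circ> \<sigma>) 0 1 \<and>
        (\<exists>g\<in>D4. \<forall>k<4. sq_corner (w \<circ> \<tau>) k = sq_corner (u \<circ> \<sigma>) (g k)))"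
proof -
  note facts = exists_obtuse_superbase_orthogonal_23[OF assms] sbB2_obtuse_and_isometric[OF assms(2)]
    coform_sbB2 card_zero_conorms[OF assms(2)] exists_permutes_zero_23[OF _ assms(2)]
    coforms_D4_related[OF assms(2)]
  show ?thesis
    by (intro conjI allI impI; (elim conjE)?) (use facts in blast)+
qed

end
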